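(* Let $G\le\mathrm{Aut}(\mathcal{T}_d)$ be self-similar. Then $\kappa_k^n(S_n\wr G)\subseteq S_{n+d-1}\wr G$ for all $1\le k\le n$, so the classes $[T_-,g,T_+]$ with $g\in S_n\wr G$ form a subgroup $\mathscr{T}(S_*\wr G)$ of $\mathscr{T}(S_*\wr\mathrm{Aut}(\mathcal{T}_d))$, and the map $[T_-,g,T_+]\mapsto((T_-,g,T_+))$ restricts to an isomorphism $\mathscr{T}(S_*\wr G)\cong V_d(G)$.
   Context: Notation for trees, wreath products, wreath recursion, almost-automorphisms $((T_-,\sigma(f_1,\dots,f_n),T_+))$, $\mathrm{AAut}(\mathcal{T}_d)$, the cloning maps $\kappa_k^n$ and the construction $\mathscr{T}(S_*\wr G)$: Fix $d\ge2$, $X=\{1,\dots,d\}$, $\mathcal{T}_d$ the rooted $d$-ary tree on $X^*$. $S_n\wr G=S_n\ltimes G^n$ with $\sigma(f_1,\dots,f_n)\tau(g_1,\dots,g_n)=\sigma\tau(f_{\tau(1)}g_1,\dots,f_{\tau(n)}g_n)$ (permutations act on the left). Each $f\in\mathrm{Aut}(\mathcal{T}_d)$ has wreath recursion $f=\rho(f)(f_1,\dots,f_d)$ with $f(xw)=\rho(f)(x)f_x(w)$; $G$ is self-similar if all $f_x$ lie in $G$ for all $f\in G$, $x\in X$. For finite rooted complete subtrees $T_\pm$ with $n$ leaves ($u_i$ leaves of $T_-$, $v_i$ of $T_+$, ordered left to right), $((T_-,\sigma(f_1,\dots,f_n),T_+))$ is the homeomorphism of $\partial\mathcal{T}_d$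 with $v_iw\mapsto u_{\sigma(i)}f_i(w)$. $V_d(G)$ is the subgroup of $\mathrm{AAut}(\mathcal{T}_d)$ of all such homeomorphisms with all $f_i\in G$. The cloning map is $(\sigma(f_1,\dots,f_n))\kappa_k^n=(\sigma)\varsigma_k^n\rho(f_k)^{(k)}(f_1,\dots,f_{k-1},f_k^1,\dots,f_k^d,f_{k+1},\dots,f_n)$ where $f_k=\rho(f_k)(f_k^1,\dots,f_k^d)$, $\tau^{(k)}\in S_{n+d-1}$ acts as $k+j-1\mapsto k+\tau(j)-1$ on $\{k,\dots,k+d-1\}$ and trivially elsewhere, and $(\sigma)\varsigma_k^n\in S_{n+d-1}$ is the permutation obtained from $\sigma$ by replacing the point $k$ of the domain by the block $k,\dots,k+d-1$ and the point $\sigma(k)$ of the range by the block $\sigma(k),\dots,\sigma(k)+d-1$, mapping the block order-preservingly ($k+j\mapsto\sigma(k)+j$) and shifting other points to preserve their relative order. $\mathscr{T}(S_*\wr G)$ is the set of triples $(T_-,g,T_+)$ ($T_\pm$ with $n$ leaves, $g\in S_n\wr G$) modulo the equivalence generated by expansions $(T_-,g,T_+)\to(T_-',(g)\kappa_k^n,T_+')$ ($T_+'$: $d$-caret added at $k$th leaf of $T_+$; $T_-'$: $d$-caret added at $\rho_n(g)(k)$th leaf of $T_-$, where $\rho_n(\sigma(\vec g))=\sigma$), with product $[T_-,f,T_+][T_+,g,U_+]=[T_-,fg,U_+]$. *)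

theory Defs
  imports "HOL-Library.List_Lexorder" "HOL-Combinatorics.Permutations" "HOL-Algebra.Group"
begin

text \<open>Vertices of T_d are the words over X = {1..d}, represented as nat lists.\<close>
type_synonym word = "nat list"
type_synonym autf = "word \<Rightarrow> word"

definition words :: "nat \<Rightarrow> word set" where
  "words d = {w. set w \<subseteq> {1..d}}"

text \<open>Automorphisms of T_d: length- and prefix-preserving bijections of X*,
  extended by the identity outside X* (so that equality is extensional).\<close>
definition AutSet :: "nat \<Rightarrow> autf set" where
  "AutSet d = {f. bij_betw f (words d) (words d)
                \<and> (\<forall>w\<in>words d. length (f w) = length w)
                \<and> (\<forall>w\<in>words d. \<forall>v\<in>words d. take (length w) (f (w @ v)) = f w)
                \<and> (\<forall>w. w \<notin> words d \<longrightarrow> f w = w)}"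

definition AutGrp :: "nat \<Rightarrow> autf monoid" where
  "AutGrp d = \<lparr>carrier = AutSet d, mult = (\<circ>), one = id\<rparr>"

text \<open>Wreath recursion f = rho(f)(f_1,...,f_d), with f(xw) = rho(f)(x) f_x(w).\<close>
definition rootperm :: "nat \<Rightarrow> autf \<Rightarrow> nat \<Rightarrow> nat" where
  "rootperm d f x = (if x \<in> {1..d} then hd (f [x]) else x)"

definition sect :: "nat \<Rightarrow> autf \<Rightarrow> nat \<Rightarrow> autf" where
  "sect d f x = (\<lambda>w. if w \<in> words d then tl (f (x # w)) else w)"

definition self_similar :: "nat \<Rightarrow> autf set \<Rightarrow> bool" where
  "self_similar d G \<longleftrightarrow> (\<forall>f\<in>G. \<forall>x\<in>{1..d}. sect d f x \<in> G)"

text \<open>An element sigma(f_1,...,f_n) is a pair (sigma, fs), sigma a permutation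
  of {1..n} (identity elsewhere), fs i in G for i in {1..n}, fs i = id elsewhere.\<close>
type_synonym wel = "(nat \<Rightarrow> nat) \<times> (nat \<Rightarrow> autf)"

definition wr :: "nat \<Rightarrow> autf set \<Rightarrow> wel set" where
  "wr n G = {(\<sigma>, fs). \<sigma> permutes {1..n} \<and> (\<forall>i\<in>{1..n}. fs i \<in> G)
                      \<and> (\<forall>i. i \<notin> {1..n} \<longrightarrow> fs i = id)}"

definition wmult :: "wel \<Rightarrow> wel \<Rightarrow> wel" where
  "wmult a b = (case a of (\<sigma>, fs) \<Rightarrow> case b of (\<tau>, gs) \<Rightarrow>
                 (\<sigma> \<circ> \<tau>, \<lambda>i. fs (\<tau> i) \<circ> gs i))"

definition varsigma :: "nat \<Rightarrow> nat \<Rightarrow> nat \<Rightarrow> (nat \<Rightarrow> nat) \<Rightarrow> nat \<Rightarrow> nat" where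
  "varsigma d n k \<sigma> i =
     (let sh = (\<lambda>m. if m < \<sigma> k then m else m + d - 1) in
      if 1 \<le> i \<and> i < k then sh (\<sigma> i)
      else if k \<le> i \<and> i < k + d then \<sigma> k + (i - k)
      else if k + d \<le> i \<and> i \<le> n + d - 1 then sh (\<sigma> (i - d + 1))
      else i)"

definition shiftperm :: "nat \<Rightarrow> nat \<Rightarrow> (nat \<Rightarrow> nat) \<Rightarrow> nat \<Rightarrow> nat" where
  "shiftperm d k \<tau> i = (if k \<le> i \<and> i < k + d then k + \<tau> (i - k + 1) - 1 else i)"

definition clone :: "nat \<Rightarrow> nat \<Rightarrow> nat \<Rightarrow> wel \<Rightarrow> wel" where
  "clone d n k g = (case g of (\<sigma>, fs) \<Rightarrow>
     (varsigma d n k \<sigma> \<circ> shiftperm d k (rootperm d (fs k)),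
      \<lambda>i. if 1 \<le> i \<and> i < k then fs i
           else if k \<le> i \<and> i < k + d then sect d (fs k) (i - k + 1)
           else if k + d \<le> i \<and> i \<le> n + d - 1 then fs (i - d + 1)
           else id))"

type_synonym tree = "word set"

definition is_tree :: "nat \<Rightarrow> tree \<Rightarrow> bool" where
  "is_tree d T \<longleftrightarrow> finite T \<and> [] \<in> T \<and> T \<subseteq> words d
     \<and> (\<forall>w x. w @ [x] \<in> T \<longrightarrow> w \<in> T)
     \<and> (\<forall>w x. w @ [x] \<in> T \<longrightarrow> (\<forall>y\<in>{1..d}. w @ [y] \<in> T))"

definition leaves :: "tree \<Rightarrow> word set" where
  "leaves T = {w\<in>T. \<forall>x. w @ [x] \<notin> T}"

definition nleaves :: "tree \<Rightarrow> nat" where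
  "nleaves T = card (leaves T)"

text \<open>The i-th leaf (1-based) in left-to-right (lexicographic) order.\<close>
definition leaf :: "tree \<Rightarrow> nat \<Rightarrow> word" where
  "leaf T i = sorted_list_of_set (leaves T) ! (i - 1)"

definition add_caret :: "nat \<Rightarrow> tree \<Rightarrow> nat \<Rightarrow> tree" where
  "add_caret d T k = T \<union> {leaf T k @ [x] | x. x \<in> {1..d}}"

type_synonym bseq = "nat \<Rightarrow> nat"

definition bd :: "nat \<Rightarrow> bseq set" where
  "bd d = {\<xi>. \<forall>i. \<xi> i \<in> {1..d}}"

definition aut_bd :: "autf \<Rightarrow> bseq \<Rightarrow> bseq" where
  "aut_bd f \<xi> = (\<lambda>i. f (map \<xi> [0..<Suc i]) ! i)"

definition bprefix :: "word \<Rightarrow> bseq \<Rightarrow> bool" where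
  "bprefix u \<xi> \<longleftrightarrow> (\<forall>j<length u. \<xi> j = u ! j)"

definition bconc :: "word \<Rightarrow> bseq \<Rightarrow> bseq" where
  "bconc u \<eta> = (\<lambda>j. if j < length u then u ! j else \<eta> (j - length u))"

type_synonym triple = "tree \<times> wel \<times> tree"

text \<open>((T_-, sigma(f_1..f_n), T_+)) : v_i w |-> u_{sigma i} f_i(w); identity off the boundary.\<close>
definition aa :: "nat \<Rightarrow> triple \<Rightarrow> bseq \<Rightarrow> bseq" where
  "aa d t = (case t of (Tm, (\<sigma>, fs), Tp) \<Rightarrow> (\<lambda>\<xi>.
     if \<xi> \<in> bd d then
       (let i = (THE i. i \<in> {1..nleaves Tp} \<and> bprefix (leaf Tp i) \<xi>);
            v = leaf Tp i
        in bconc (leaf Tm (\<sigma> i)) (aut_bd (fs i) (\<lambda>j. \<xi> (j + length v))))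
     else \<xi>))"

definition trip :: "nat \<Rightarrow> autf set \<Rightarrow> triple set" where
  "trip d G = {(Tm, g, Tp). is_tree d Tm \<and> is_tree d Tp \<and> nleaves Tm = nleaves Tp
                            \<and> g \<in> wr (nleaves Tp) G}"

definition Vd :: "nat \<Rightarrow> autf set \<Rightarrow> (bseq \<Rightarrow> bseq) set" where
  "Vd d G = aa d ` trip d G"

definition VGrp :: "nat \<Rightarrow> autf set \<Rightarrow> (bseq \<Rightarrow> bseq) monoid" where
  "VGrp d G = \<lparr>carrier = Vd d G, mult = (\<circ>), one = id\<rparr>"

definition Texp :: "nat \<Rightarrow> (triple \<times> triple) set" where
  "Texp d = {((Tm, g, Tp), (add_caret d Tm (fst g k), clone d (nleaves Tp) k g, add_caret d Tp k))
              | Tm g Tp k. (Tm, g, Tp) \<in> trip d (AutSet d) \<and> 1 \<le> k \<and> k \<le> nleaves Tp}"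

definition Teq :: "nat \<Rightarrow> (triple \<times> triple) set" where
  "Teq d = (Texp d \<union> (Texp d)\<inverse>)\<^sup>*"

definition tmult :: "nat \<Rightarrow> triple set \<Rightarrow> triple set \<Rightarrow> triple set" where
  "tmult d A B = \<Union>{Teq d `` {(Tm, wmult f g, Up)} | Tm f Tp g Up.
                      (Tm, f, Tp) \<in> A \<and> (Tp, g, Up) \<in> B}"

definition tone :: triple where
  "tone = ({[]}, (id, \<lambda>_. id), {[]})"

definition TGrp :: "nat \<Rightarrow> triple set monoid" where
  "TGrp d = \<lparr>carrier = trip d (AutSet d) // Teq d, mult = tmult d, one = Teq d `` {tone}\<rparr>"

definition TS :: "nat \<Rightarrow> autf set \<Rightarrow> triple set set" where
  "TS d G = (\<lambda>x. Teq d `` {x}) ` trip d G"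

definition Phi :: "nat \<Rightarrow> triple set \<Rightarrow> bseq \<Rightarrow> bseq" where
  "Phi d A = aa d (SOME t. t \<in> A)"

end

theory Submission
  imports Defs
begin

text \<open>An expansion at the k-th leaf v of the range tree replaces v by its d children, the
  automorphism f attached to v by its d sections, and the matching leaf of the domain tree by its
  children, permuted by the root permutation of f. Since f acts on the cone below v as the root
  permutation followed by the sections, the realized homeomorphism does not change, and
  self-similarity keeps the sections in G. For d \<ge> 2 a triple is determined by its homeomorphism
  and its range tree, and any triple can be expanded until its range (or domain) tree is any
  given larger tree. Hence the expansion class of a triple is exactly the set of triples
  realizing the same homeomorphism, the product of classes corresponds to composition, and
  T(S_* wr G) is the image of the group V_d(G) under h \<mapsto> {triples realizing h}, with
  inverse Phi.\<close>

section \<open>Automorphisms of the tree and their action on the boundary\<close>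

lemma words_simps[simp]:
  "[] \<in> words d"
  "(x # w \<in> words d) = (x \<in> {1..d} \<and> w \<in> words d)"
  "(w @ v \<in> words d) = (w \<in> words d \<and> v \<in> words d)"
  by (auto simp: words_def)

lemma AutSetD:
  assumes "f \<in> AutSet d"
  shows "bij_betw f (words d) (words d)" "\<And>w. w \<in> words d \<Longrightarrow> length (f w) = length w"
    "\<And>w v. w \<in> words d \<Longrightarrow> v \<in> words d \<Longrightarrow> take (length w) (f (w @ v)) = f w"
    "\<And>w. w \<notin> words d \<Longrightarrow> f w = w"
  using assms by (auto simp: AutSet_def)

lemma AutSet_in_words: "f \<in> AutSet d \<Longrightarrow> w \<in> words d \<Longrightarrow> f w \<in> words d"
  using AutSetD(1) bij_betwE by blast

lemma AutSet_inj: "f \<in> AutSet d \<Longrightarrow> w \<in> words d \<Longrightarrow> v \<in> words d \<Longrightarrow> f w = f v \<Longrightarrow> w = v"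
  using AutSetD(1) by (metis bij_betw_imp_inj_on inj_onD)

lemma words_nth: "w \<in> words d \<Longrightarrow> i < length w \<Longrightarrow> w ! i \<in> {1..d}"
proof -
  assume "w \<in> words d" "i < length w"
  moreover have "w ! i \<in> set w" using \<open>i < length w\<close> by (rule nth_mem)
  ultimately show ?thesis unfolding words_def mem_Collect_eq by blast
qed

lemma map_bd_in_words: "\<eta> \<in> bd d \<Longrightarrow> map \<eta> xs \<in> words d"
  by (auto simp: words_def bd_def)

lemma AutSet_map_aut_bd:
  assumes f: "f \<in> AutSet d" and e: "\<eta> \<in> bd d"
  shows "f (map \<eta> [0..<m]) = map (aut_bd f \<eta>) [0..<m]"
proof (induction m)
  case 0
  then show ?case using AutSetD(2)[OF f, of "[]"] by simp
next
  case (Suc m)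
  let ?w = "map \<eta> [0..<m]"
  have w: "?w \<in> words d" "[\<eta> m] \<in> words d" using map_bd_in_words[OF e, of "[0..<m]"] map_bd_in_words[OF e, of "[m]"] by auto
  have eq: "map \<eta> [0..<Suc m] = ?w @ [\<eta> m]" by simp
  have len: "length (f (?w @ [\<eta> m])) = Suc m" using AutSetD(2)[OF f, of "?w @ [\<eta> m]"] w by simp
  have tk: "take m (f (?w @ [\<eta> m])) = f ?w" using AutSetD(3)[OF f w] by simp
  have "f (?w @ [\<eta> m]) = take m (f (?w @ [\<eta> m])) @ [f (?w @ [\<eta> m]) ! m]"
    using len by (metis lessI take_Suc_conv_app_nth take_all_iff order_refl)
  also have "\<dots> = map (aut_bd f \<eta>) [0..<m] @ [aut_bd f \<eta> m]"
    using tk Suc.IH by (simp add: aut_bd_def)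
  finally show ?case using eq by simp
qed

lemma aut_bd_in_bd:
  assumes f: "f \<in> AutSet d" and e: "\<eta> \<in> bd d"
  shows "aut_bd f \<eta> \<in> bd d"
proof -
  have "aut_bd f \<eta> i \<in> {1..d}" for i
  proof -
    have w: "f (map \<eta> [0..<Suc i]) \<in> words d" using AutSet_in_words[OF f map_bd_in_words[OF e]] .
    have l: "length (f (map \<eta> [0..<Suc i])) = Suc i" using AutSetD(2)[OF f map_bd_in_words[OF e, of "[0..<Suc i]"]] by (simp del: upt_Suc)
    show ?thesis using words_nth[OF w] l unfolding aut_bd_def by (simp del: upt_Suc)
  qed
  then show ?thesis by (auto simp: bd_def)
qed

lemma aut_bd_comp:
  assumes f: "f \<in> AutSet d" and g: "g \<in> AutSet d" and e: "\<eta> \<in> bd d"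
  shows "aut_bd f (aut_bd g \<eta>) = aut_bd (f \<circ> g) \<eta>"
proof
  fix i
  have "map (aut_bd g \<eta>) [0..<Suc i] = g (map \<eta> [0..<Suc i])" by (rule AutSet_map_aut_bd[OF g e, symmetric])
  then show "aut_bd f (aut_bd g \<eta>) i = aut_bd (f \<circ> g) \<eta> i" by (simp add: aut_bd_def)
qed

lemma aut_bd_id[simp]: "aut_bd id \<eta> = \<eta>"
  by (auto simp: aut_bd_def simp del: upt_Suc)

lemma aut_bd_inject:
  assumes d: "d \<ge> 1" and f: "f \<in> AutSet d" and g: "g \<in> AutSet d"
    and eq: "\<And>\<eta>. \<eta> \<in> bd d \<Longrightarrow> aut_bd f \<eta> = aut_bd g \<eta>"
  shows "f = g"
proof
  fix w
  show "f w = g w"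
  proof (cases "w \<in> words d")
    case True
    define \<eta> where "\<eta> = (\<lambda>j. if j < length w then w ! j else 1)"
    have "w ! j \<in> {1..d}" if "j < length w" for j using True that by (rule words_nth)
    then have e: "\<eta> \<in> bd d" using d unfolding \<eta>_def bd_def by auto
    have m: "map \<eta> [0..<length w] = w" unfolding \<eta>_def by (rule nth_equalityI) auto
    show ?thesis using AutSet_map_aut_bd[OF f e, of "length w"] AutSet_map_aut_bd[OF g e, of "length w"] eq[OF e] m by simp
  next
    case False
    then show ?thesis using AutSetD(4)[OF f] AutSetD(4)[OF g] by simp
  qed
qed

lemma map_bconc_singleton: "map (bconc [j] \<eta>) [0..<Suc i] = j # map \<eta> [0..<i]"
  by (induction i) (auto simp: bconc_def)

lemma AutSet_Cons:
  assumes f: "f \<in> AutSet d" and x: "x \<in> {1..d}" and w: "w \<in> words d"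
  shows "f (x # w) = rootperm d f x # sect d f x w"
proof -
  have xw: "[x] \<in> words d" using x by simp
  have l: "length (f (x # w)) = Suc (length w)" using AutSetD(2)[OF f, of "x#w"] x w by simp
  have t: "take 1 (f ([x] @ w)) = f [x]" using AutSetD(3)[OF f xw w] by simp
  obtain a r where ar: "f (x # w) = a # r" using l by (cases "f (x#w)") auto
  have "f [x] = [a]" using t ar by simp
  then show ?thesis using ar x w by (simp add: rootperm_def sect_def)
qed

lemma aut_bd_bconc_singleton:
  assumes f: "f \<in> AutSet d" and x: "x \<in> {1..d}" and e: "\<eta> \<in> bd d"
  shows "aut_bd f (bconc [x] \<eta>) = bconc [rootperm d f x] (aut_bd (sect d f x) \<eta>)"
proof
  fix i
  show "aut_bd f (bconc [x] \<eta>) i = bconc [rootperm d f x] (aut_bd (sect d f x) \<eta>) i"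
  proof (cases i)
    case 0
    then show ?thesis using AutSet_Cons[OF f x, of "[]"] by (simp add: aut_bd_def bconc_def)
  next
    case (Suc m)
    have "f (x # map \<eta> [0..<Suc m]) = rootperm d f x # sect d f x (map \<eta> [0..<Suc m])"
      using AutSet_Cons[OF f x map_bd_in_words[OF e]] .
    then show ?thesis unfolding aut_bd_def using Suc by (simp only: map_bconc_singleton) (simp add: bconc_def)
  qed
qed

lemma id_AutSet: "id \<in> AutSet d"
  by (auto simp: AutSet_def)

lemma comp_AutSet:
  assumes f: "f \<in> AutSet d" and g: "g \<in> AutSet d"
  shows "f \<circ> g \<in> AutSet d"
proof -
  have b: "bij_betw (f \<circ> g) (words d) (words d)" using AutSetD(1)[OF f] AutSetD(1)[OF g] bij_betw_trans by blast
  have l: "\<forall>w\<in>words d. length ((f \<circ> g) w) = length w" using AutSetD(2)[OF f] AutSetD(2)[OF g] AutSet_in_words[OF g] by simp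
  have p: "take (length w) ((f \<circ> g) (w @ v)) = (f \<circ> g) w" if w: "w \<in> words d" and v: "v \<in> words d" for w v
  proof -
    have gw: "g (w @ v) \<in> words d" using AutSet_in_words[OF g] w v by simp
    have "g (w @ v) = g w @ drop (length w) (g (w @ v))"
      using AutSetD(3)[OF g w v] by (metis append_take_drop_id)
    moreover have "drop (length w) (g (w @ v)) \<in> words d" using gw by (auto simp: words_def dest: in_set_dropD)
    moreover have "length (g w) = length w" using AutSetD(2)[OF g w] .
    ultimately show ?thesis using AutSetD(3)[OF f AutSet_in_words[OF g w], of "drop (length w) (g (w @ v))"] by simp
  qed
  have o: "\<forall>w. w \<notin> words d \<longrightarrow> (f \<circ> g) w = w" using AutSetD(4)[OF f] AutSetD(4)[OF g] by simp
  show ?thesis using b l p o by (auto simp: AutSet_def)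
qed

definition autinv :: "nat \<Rightarrow> autf \<Rightarrow> autf" where
  "autinv d f = (\<lambda>w. if w \<in> words d then inv_into (words d) f w else w)"

lemma autinv_AutSet:
  assumes f: "f \<in> AutSet d"
  shows "autinv d f \<in> AutSet d" "autinv d f \<circ> f = id" "f \<circ> autinv d f = id"
proof -
  have bf: "bij_betw f (words d) (words d)" using AutSetD(1)[OF f] .
  have bi: "bij_betw (inv_into (words d) f) (words d) (words d)" using bij_betw_inv_into[OF bf] .
  have bi2: "bij_betw (autinv d f) (words d) (words d)"
    using bi by (rule bij_betw_cong[THEN iffD1, rotated]) (simp add: autinv_def)
  have fi: "f (autinv d f w) = w" for w
    by (cases "w \<in> words d") (auto simp: autinv_def bij_betw_inv_into_right[OF bf] AutSetD(4)[OF f])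
  have iff: "autinv d f (f w) = w" for w
  proof (cases "w \<in> words d")
    case True then show ?thesis using AutSet_in_words[OF f True] bij_betw_inv_into_left[OF bf True] by (simp add: autinv_def)
  next
    case False then show ?thesis by (simp add: autinv_def AutSetD(4)[OF f])
  qed
  have iw: "w \<in> words d \<Longrightarrow> autinv d f w \<in> words d" for w using bi2 bij_betwE by blast
  have il: "length (autinv d f w) = length w" if "w \<in> words d" for w
    using AutSetD(2)[OF f iw[OF that]] fi[of w] by simp
  have ip: "take (length w) (autinv d f (w @ v)) = autinv d f w" if w: "w \<in> words d" and v: "v \<in> words d" for w v
  proof -
    let ?a = "autinv d f (w @ v)"
    have aw: "?a \<in> words d" using iw w v by simp
    have al: "length ?a = length w + length v" using il[of "w@v"] w v by simp
    let ?b = "take (length w) ?a" let ?c = "drop (length w) ?a"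
    have bw: "?b \<in> words d" "?c \<in> words d" using aw by (auto simp: words_def dest: in_set_takeD in_set_dropD)
    have "take (length ?b) (f (?b @ ?c)) = f ?b" using AutSetD(3)[OF f bw] .
    moreover have "?b @ ?c = ?a" by simp
    moreover have "length ?b = length w" using al by simp
    ultimately have "f ?b = w" using fi[of "w@v"] by simp
    then show ?thesis using iff[of ?b] by simp
  qed
  have io: "\<forall>w. w \<notin> words d \<longrightarrow> autinv d f w = w" by (simp add: autinv_def)
  show "autinv d f \<in> AutSet d" using bi2 il ip io by (auto simp: AutSet_def)
  show "autinv d f \<circ> f = id" using iff by auto
  show "f \<circ> autinv d f = id" using fi by auto
qed

lemma AutGrp_group: "group (AutGrp d)"
proof (rule groupI)
  show "\<exists>y\<in>carrier (AutGrp d). y \<otimes>\<^bsub>AutGrp d\<^esub> x = \<one>\<^bsub>AutGrp d\<^esub>" if "x \<in> carrier (AutGrp d)" for x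
    using autinv_AutSet[of x d] that by (auto simp: AutGrp_def)
qed (auto simp: AutGrp_def id_AutSet comp_AutSet comp_assoc)

lemma AutGrp_inv: "f \<in> AutSet d \<Longrightarrow> inv\<^bsub>AutGrp d\<^esub> f = autinv d f"
  using group.inv_equality[OF AutGrp_group, where x=f and y="autinv d f"] autinv_AutSet[of f d] by (simp add: AutGrp_def)

lemma AutSet_singleton: "f \<in> AutSet d \<Longrightarrow> x \<in> {1..d} \<Longrightarrow> f [x] = [rootperm d f x]"
  using AutSetD(2)[of f d "[x]"] by (cases "f [x]") (auto simp: rootperm_def)

lemma rootperm_permutes:
  assumes f: "f \<in> AutSet d"
  shows "rootperm d f permutes {1..d}"
proof -
  note one = AutSet_singleton[OF f]
  have img: "rootperm d f x \<in> {1..d}" if "x \<in> {1..d}" for x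
    using AutSet_in_words[OF f, of "[x]"] one[OF that] that by simp
  have inj: "inj_on (rootperm d f) {1..d}"
  proof (rule inj_onI)
    fix x y assume x: "x \<in> {1..d}" and y: "y \<in> {1..d}" and e: "rootperm d f x = rootperm d f y"
    have "f [x] = f [y]" using one[OF x] one[OF y] e by simp
    then show "x = y" using AutSet_inj[OF f, of "[x]" "[y]"] x y by simp
  qed
  have "rootperm d f ` {1..d} = {1..d}"
    by (rule endo_inj_surj[OF _ _ inj]) (use img in auto)
  then have "bij_betw (rootperm d f) {1..d} {1..d}" using inj by (simp add: bij_betw_def)
  then show ?thesis by (rule bij_imp_permutes) (auto simp: rootperm_def)
qed

lemma sect_image_words:
  assumes f: "f \<in> AutSet d" and x: "x \<in> {1..d}"
  shows "sect d f x ` words d = words d"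
proof
  show "sect d f x ` words d \<subseteq> words d"
  proof
    fix u assume "u \<in> sect d f x ` words d"
    then obtain w where w: "w \<in> words d" "u = sect d f x w" by blast
    have "f (x # w) \<in> words d" using AutSet_in_words[OF f] w(1) x by simp
    then show "u \<in> words d" using AutSet_Cons[OF f x w(1)] w(2) by simp
  qed
  show "words d \<subseteq> sect d f x ` words d"
  proof
    fix v assume v: "v \<in> words d"
    have rx: "rootperm d f x \<in> {1..d}" using permutes_in_image[OF rootperm_permutes[OF f]] x by blast
    let ?a = "autinv d f (rootperm d f x # v)"
    have aw: "?a \<in> words d" using AutSet_in_words[OF autinv_AutSet(1)[OF f]] rx v by simp
    have al: "length ?a = Suc (length v)" using AutSetD(2)[OF autinv_AutSet(1)[OF f]] rx v by simp
    have fa: "f ?a = rootperm d f x # v" using autinv_AutSet(3)[OF f] by (metis comp_apply id_apply)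
    obtain y w where yw: "?a = y # w" using al by (cases ?a) auto
    have y: "y \<in> {1..d}" and w: "w \<in> words d" using aw yw by auto
    have "f (y # w) = rootperm d f y # sect d f y w" using AutSet_Cons[OF f y w] .
    then have "rootperm d f y = rootperm d f x" "sect d f y w = v" using fa yw by auto
    moreover have "y = x" using calculation(1) rootperm_permutes[OF f] y x
      by (metis permutes_inj inj_eq)
    ultimately show "v \<in> sect d f x ` words d" using w by auto
  qed
qed

lemma sect_AutSet:
  assumes f: "f \<in> AutSet d" and x: "x \<in> {1..d}"
  shows "sect d f x \<in> AutSet d"
proof -
  let ?s = "sect d f x"
  have c: "f (x # w) = rootperm d f x # ?s w" if "w \<in> words d" for w using AutSet_Cons[OF f x that] .
  have sl: "length (?s w) = length w" if "w \<in> words d" for w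
    using AutSetD(2)[OF f, of "x#w"] c[OF that] x that by simp
  have sp: "take (length w) (?s (w @ v)) = ?s w" if w: "w \<in> words d" and v: "v \<in> words d" for w v
  proof -
    have "take (length (x#w)) (f ((x#w) @ v)) = f (x#w)" using AutSetD(3)[OF f, of "x#w" v] x w v by simp
    then show ?thesis using c[of "w@v"] c[OF w] w v by simp
  qed
  have inj: "inj_on ?s (words d)"
  proof (rule inj_onI)
    fix a b assume a: "a \<in> words d" and b: "b \<in> words d" and e: "?s a = ?s b"
    have "f (x#a) = f (x#b)" using c[OF a] c[OF b] e by simp
    then show "a = b" using AutSet_inj[OF f, of "x#a" "x#b"] a b x by simp
  qed
  have "\<forall>w. w \<notin> words d \<longrightarrow> ?s w = w" by (simp add: sect_def)
  then show ?thesis using inj sect_image_words[OF f x] sl sp by (auto simp: AutSet_def bij_betw_def)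
qed

lemma self_similar_AutSet: "self_similar d (AutSet d)"
  by (simp add: self_similar_def sect_AutSet)


section \<open>Finite complete subtrees\<close>

lemma tree_prefix: "is_tree d T \<Longrightarrow> w @ v \<in> T \<Longrightarrow> w \<in> T"
proof (induction v rule: rev_induct)
  case Nil then show ?case by simp
next
  case (snoc x xs)
  have "(w @ xs) @ [x] \<in> T" using snoc.prems by simp
  then have "w @ xs \<in> T" using snoc.prems(1) unfolding is_tree_def by blast
  then show ?case using snoc.IH snoc.prems(1) by blast
qed

lemma tree_words: "is_tree d T \<Longrightarrow> w \<in> T \<Longrightarrow> w \<in> words d"
  unfolding is_tree_def by blast

lemma tree_finite: "is_tree d T \<Longrightarrow> finite T"
  unfolding is_tree_def by blast

lemma leaves_sub: "leaves T \<subseteq> T"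
  unfolding leaves_def by blast

lemma finite_leaves: "is_tree d T \<Longrightarrow> finite (leaves T)"
  by (rule finite_subset[OF leaves_sub tree_finite])

lemma leaf_antichain: "is_tree d T \<Longrightarrow> u \<in> leaves T \<Longrightarrow> u @ v \<in> T \<Longrightarrow> v = []"
proof (cases v)
  case (Cons c v')
  assume t: "is_tree d T" and u: "u \<in> leaves T" and uv: "u @ v \<in> T"
  have "u @ [c] \<in> T" using tree_prefix[OF t, of "u @ [c]" v'] uv Cons by simp
  then show ?thesis using u by (simp add: leaves_def)
qed simp

lemma length_le_Max: "is_tree d T \<Longrightarrow> w \<in> T \<Longrightarrow> length w \<le> Max (length ` T)"
  using tree_finite by (simp add: Max_ge)

lemma node_to_leaf: "is_tree d T \<Longrightarrow> w \<in> T \<Longrightarrow> \<exists>v. w @ v \<in> leaves T"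
proof (induction "Max (length ` T) - length w" arbitrary: w rule: less_induct)
  case less
  show ?case
  proof (cases "w \<in> leaves T")
    case True then show ?thesis by (metis append_Nil2)
  next
    case False
    then obtain x where x: "w @ [x] \<in> T" using less.prems by (auto simp: leaves_def)
    have "length (w @ [x]) \<le> Max (length ` T)" using length_le_Max[OF less.prems(1) x] .
    then have "Max (length ` T) - length (w @ [x]) < Max (length ` T) - length w" by simp
    then obtain v where "w @ [x] @ v \<in> leaves T" using less.hyps[OF _ less.prems(1) x] by auto
    then show ?thesis by blast
  qed
qed

lemma tree_eq_leaves:
  assumes T: "is_tree d T" and S: "is_tree d S" and e: "leaves T = leaves S"
  shows "T = S"
proof -
  have "w \<in> S" if h: "w \<in> T" "is_tree d T" "is_tree d S" "leaves T = leaves S" for w T S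
  proof -
    obtain v where "w @ v \<in> leaves T" using node_to_leaf[OF h(2) h(1)] by blast
    then have "w @ v \<in> leaves S" using h(4) by simp
    then have "w @ v \<in> S" using leaves_sub[of S] by blast
    then show ?thesis using tree_prefix[OF h(3)] by blast
  qed
  note a = this
  show ?thesis
  proof (rule equalityI; rule subsetI)
    fix w assume "w \<in> T" then show "w \<in> S" using a[of w T S] T S e by simp
  next
    fix w assume "w \<in> S" then show "w \<in> T" using a[of w S T] T S e by simp
  qed
qed

lemma tree_union: "is_tree d U1 \<Longrightarrow> is_tree d U2 \<Longrightarrow> is_tree d (U1 \<union> U2)"
  unfolding is_tree_def by blast

lemma tree_eq_if_leaves_sub:
  assumes T: "is_tree d T" and U: "is_tree d U" and sub: "T \<subseteq> U" and lv: "leaves T \<subseteq> leaves U"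
  shows "T = U"
proof -
  have "u \<in> T" if "u \<in> U" for u
    using that
  proof (induction u rule: rev_induct)
    case Nil then show ?case using T by (simp add: is_tree_def)
  next
    case (snoc c u)
    have uT: "u \<in> T" using snoc.IH tree_prefix[OF U snoc.prems] by blast
    show ?case
    proof (rule ccontr)
      assume nc: "u @ [c] \<notin> T"
      have "c \<in> {1..d}" using tree_words[OF U snoc.prems] by simp
      then have "\<forall>x. u @ [x] \<notin> T" using nc T unfolding is_tree_def by blast
      then have "u \<in> leaves U" using uT lv by (auto simp: leaves_def)
      then show False using snoc.prems by (simp add: leaves_def)
    qed
  qed
  then show ?thesis using sub by blast
qed

lemma tree_root: "is_tree d {[]}"
  by (simp add: is_tree_def)

lemma nleaves_root: "nleaves {[]} = 1"
proof -
  have "leaves {[]} = {[]}" by (auto simp: leaves_def)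
  then show ?thesis by (simp add: nleaves_def)
qed

lemma bprefix_map: "bprefix u \<xi> \<longleftrightarrow> u = map \<xi> [0..<length u]"
  unfolding bprefix_def list_eq_iff_nth_eq by auto

lemma bprefix_bconc: "bprefix u (bconc u \<eta>)"
  by (simp add: bprefix_def bconc_def)

lemma bconc_shift[simp]: "(\<lambda>j. bconc u \<eta> (j + length u)) = \<eta>"
  by (simp add: bconc_def)

lemma bconc_decomp: "bprefix u \<xi> \<Longrightarrow> bconc u (\<lambda>j. \<xi> (j + length u)) = \<xi>"
  by (auto simp: bprefix_def bconc_def)

lemma bconc_bd: "u \<in> words d \<Longrightarrow> \<eta> \<in> bd d \<Longrightarrow> bconc u \<eta> \<in> bd d"
  unfolding bd_def bconc_def using words_nth by auto

lemma shift_bd: "\<xi> \<in> bd d \<Longrightarrow> (\<lambda>j. \<xi> (j + m)) \<in> bd d"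
  by (simp add: bd_def)

lemma bconc_append: "bconc (u @ v) \<eta> = bconc u (bconc v \<eta>)"
  by (rule ext) (auto simp: bconc_def nth_append)

lemma bprefix_cases:
  assumes "bprefix u \<xi>" "bprefix v \<xi>" "length u \<le> length v"
  shows "v = u @ map \<xi> [length u..<length v]"
proof -
  have "u = map \<xi> [0..<length u]" "v = map \<xi> [0..<length v]" using assms bprefix_map by blast+
  moreover have "[0..<length v] = [0..<length u] @ [length u..<length v]"
    using assms(3) by (metis le0 upt_add_eq_append le_add_diff_inverse)
  ultimately show ?thesis by (metis map_append)
qed

lemma leaf_bprefix_unique:
  assumes t: "is_tree d T" and u: "u \<in> leaves T" and v: "v \<in> leaves T"
    and pu: "bprefix u \<xi>" and pv: "bprefix v \<xi>"
  shows "u = v"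
proof (cases "length u \<le> length v")
  case True
  then have e: "v = u @ map \<xi> [length u..<length v]" using bprefix_cases pu pv by blast
  have "v \<in> T" using v leaves_sub by blast
  then have "u @ map \<xi> [length u..<length v] \<in> T" using e by simp
  then have "map \<xi> [length u..<length v] = []" by (rule leaf_antichain[OF t u])
  then show ?thesis using e by (metis append_Nil2)
next
  case False
  then have e: "u = v @ map \<xi> [length v..<length u]" using bprefix_cases pu pv by simp
  have "u \<in> T" using u leaves_sub by blast
  then have "v @ map \<xi> [length v..<length u] \<in> T" using e by simp
  then have "map \<xi> [length v..<length u] = []" by (rule leaf_antichain[OF t v])
  then show ?thesis using e by (metis append_Nil2)
qed

lemma leaf_bprefix_exists:
  assumes t: "is_tree d T" and x: "\<xi> \<in> bd d"
  shows "\<exists>u\<in>leaves T. bprefix u \<xi>"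
proof -
  have "map \<xi> [0..<m] \<in> T \<Longrightarrow> \<exists>u\<in>leaves T. bprefix u \<xi>" for m
  proof (induction "Max (length ` T) - m" arbitrary: m rule: less_induct)
    case less
    show ?case
    proof (cases "map \<xi> [0..<m] \<in> leaves T")
      case True
      have "bprefix (map \<xi> [0..<m]) \<xi>" by (simp add: bprefix_def)
      then show ?thesis using True by blast
    next
      case False
      then obtain y where "map \<xi> [0..<m] @ [y] \<in> T" using less.prems by (auto simp: leaves_def)
      moreover have "\<xi> m \<in> {1..d}" using x by (simp add: bd_def)
      moreover have sib: "\<forall>w x. w @ [x] \<in> T \<longrightarrow> (\<forall>y\<in>{1..d}. w @ [y] \<in> T)"
        using t unfolding is_tree_def by blast
      ultimately have "map \<xi> [0..<m] @ [\<xi> m] \<in> T" by blast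
      then have m1: "map \<xi> [0..<Suc m] \<in> T" by simp
      have "Suc m \<le> Max (length ` T)" using length_le_Max[OF t m1] by simp
      then show ?thesis using less.hyps[OF _ m1] by simp
    qed
  qed
  moreover have "map \<xi> [0..<0] \<in> T" using t by (simp add: is_tree_def)
  ultimately show ?thesis by blast
qed

lemma nleaves_len: "nleaves T = length (sorted_list_of_set (leaves T))"
  by (simp add: nleaves_def)

lemma leaf_in_leaves: "is_tree d T \<Longrightarrow> i \<in> {1..nleaves T} \<Longrightarrow> leaf T i \<in> leaves T"
proof -
  assume t: "is_tree d T" and i: "i \<in> {1..nleaves T}"
  let ?L = "sorted_list_of_set (leaves T)"
  have "i - 1 < length ?L" using i by (auto simp: nleaves_def)
  then have "?L ! (i - 1) \<in> set ?L" by (rule nth_mem)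
  then show ?thesis using finite_leaves[OF t] by (simp add: leaf_def)
qed

lemma leaf_inj: "is_tree d T \<Longrightarrow> i \<in> {1..nleaves T} \<Longrightarrow> j \<in> {1..nleaves T} \<Longrightarrow> leaf T i = leaf T j \<Longrightarrow> i = j"
proof -
  assume i: "i \<in> {1..nleaves T}" and j: "j \<in> {1..nleaves T}" and e: "leaf T i = leaf T j"
  let ?L = "sorted_list_of_set (leaves T)"
  have "distinct ?L" by simp
  moreover have "i - 1 < length ?L" "j - 1 < length ?L" using i j by (auto simp: nleaves_def)
  ultimately have "i - 1 = j - 1" using e unfolding leaf_def by (simp add: nth_eq_iff_index_eq)
  moreover have "i \<ge> 1" "j \<ge> 1" using i j by auto
  ultimately show ?thesis by linarith
qed

lemma leaf_surj: "is_tree d T \<Longrightarrow> u \<in> leaves T \<Longrightarrow> \<exists>i\<in>{1..nleaves T}. leaf T i = u"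
proof -
  assume t: "is_tree d T" and u: "u \<in> leaves T"
  let ?L = "sorted_list_of_set (leaves T)"
  have "u \<in> set ?L" using u finite_leaves[OF t] by simp
  then obtain j where j: "j < length ?L" "?L ! j = u" by (meson in_set_conv_nth)
  have "Suc j \<in> {1..nleaves T}" using j(1) by (simp add: nleaves_def)
  moreover have "leaf T (Suc j) = u" using j(2) by (simp add: leaf_def)
  ultimately show ?thesis by blast
qed

lemma leaf_in_tree: "is_tree d T \<Longrightarrow> i \<in> {1..nleaves T} \<Longrightarrow> leaf T i \<in> T"
  using leaf_in_leaves[of d T i] leaves_sub[of T] by (simp add: subset_iff)

lemma leaf_in_words: "is_tree d T \<Longrightarrow> i \<in> {1..nleaves T} \<Longrightarrow> leaf T i \<in> words d"
  using leaf_in_tree[of d T i] tree_words[of d T] by simp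

lemma leaves_eq_leaf_image: "is_tree d T \<Longrightarrow> leaves T = leaf T ` {1..nleaves T}"
  using leaf_surj[of d T] leaf_in_leaves[of d T] by fastforce

lemma bd_leaf_decomp:
  assumes t: "is_tree d T" and x: "\<xi> \<in> bd d"
  shows "\<exists>i\<in>{1..nleaves T}. \<exists>\<eta>\<in>bd d. \<xi> = bconc (leaf T i) \<eta>"
proof -
  obtain u where u: "u \<in> leaves T" "bprefix u \<xi>" using leaf_bprefix_exists[OF t x] by blast
  obtain i where i: "i \<in> {1..nleaves T}" "leaf T i = u" using leaf_surj[OF t u(1)] by blast
  have "\<xi> = bconc (leaf T i) (\<lambda>j. \<xi> (j + length u))" using i(2) bconc_decomp[OF u(2)] by simp
  then show ?thesis using i(1) shift_bd[OF x] by blast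
qed

lemma leaf_index_unique:
  assumes t: "is_tree d T" and i: "i \<in> {1..nleaves T}" and j: "j \<in> {1..nleaves T}"
    and p: "bprefix (leaf T j) (bconc (leaf T i) \<eta>)"
  shows "j = i"
proof -
  have "leaf T j = leaf T i" using leaf_bprefix_unique[OF t leaf_in_leaves[OF t j] leaf_in_leaves[OF t i] p bprefix_bconc] .
  then show ?thesis using leaf_inj[OF t j i] by simp
qed


lemma list_less_snoc: "(u::nat list) < u @ [x]"
  unfolding list_less_def lexord_def by auto

lemma list_less_snoc_mono: "(x::nat) < y \<Longrightarrow> (l::nat list) @ [x] < l @ [y]"
  unfolding list_less_def lexord_def by auto

lemma list_less_append_nonprefix:
  assumes "(u::nat list) < c" and "\<And>v. c \<noteq> u @ v"
  shows "u @ s < c"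
proof -
  have "(u, c) \<in> lexord {(u, v). u < v}" using assms(1) by (simp add: list_less_def)
  then obtain p a b v w where "a < b" "u = p @ a # v" "c = p @ b # w"
    using assms(2) unfolding lexord_def by blast
  then show ?thesis unfolding list_less_def lexord_def by auto
qed

context
  fixes d :: nat and T :: tree and k :: nat
  assumes t: "is_tree d T" and k: "k \<in> {1..nleaves T}" and d: "d \<ge> 1"
begin

abbreviation "leaf_k \<equiv> leaf T k"
abbreviation "carets \<equiv> {leaf T k @ [x] | x. x \<in> {1..d}}"

lemma leaf_k_in_leaves: "leaf_k \<in> leaves T" using leaf_in_leaves[OF t k] .
lemma leaf_k_in_tree: "leaf_k \<in> T" using leaf_in_tree[OF t k] .
lemma leaf_k_in_words: "leaf_k \<in> words d" using leaf_in_words[OF t k] .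

lemma add_caret_tree: "is_tree d (add_caret d T k)"
proof -
  have fin: "finite (add_caret d T k)"
  proof -
    have "carets = (\<lambda>x. leaf_k @ [x]) ` {1..d}" by auto
    then show ?thesis using tree_finite[OF t] by (simp add: add_caret_def)
  qed
  have e: "[] \<in> add_caret d T k" using t by (simp add: add_caret_def is_tree_def)
  have w: "add_caret d T k \<subseteq> words d" using t leaf_k_in_words by (auto simp: add_caret_def is_tree_def)
  have p: "w \<in> add_caret d T k" if "w @ [x] \<in> add_caret d T k" for w x
  proof -
    have tp: "\<forall>w x. w @ [x] \<in> T \<longrightarrow> w \<in> T" using t unfolding is_tree_def by blast
    show ?thesis using that leaf_k_in_tree tp unfolding add_caret_def by auto
  qed
  have s: "\<forall>y\<in>{1..d}. w @ [y] \<in> add_caret d T k" if "w @ [x] \<in> add_caret d T k" for w x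
  proof -
    have ts: "\<forall>w x. w @ [x] \<in> T \<longrightarrow> (\<forall>y\<in>{1..d}. w @ [y] \<in> T)" using t unfolding is_tree_def by blast
    show ?thesis using that ts unfolding add_caret_def by auto
  qed
  show ?thesis unfolding is_tree_def using fin e w p s by blast
qed

lemma leaves_add_caret: "leaves (add_caret d T k) = (leaves T - {leaf_k}) \<union> carets"
proof -
  have a: "w @ [x] \<notin> T" if "w \<in> carets" for w x
  proof
    assume "w @ [x] \<in> T"
    then have "leaf_k @ [hd (drop (length leaf_k) w)] \<in> T" using that tree_prefix[OF t, of "leaf_k @ [_]" "[x]"] by auto
    then show False using leaf_k_in_leaves by (simp add: leaves_def)
  qed
  have lkn: "leaf_k \<notin> leaves (add_caret d T k)"
    using d by (auto simp: leaves_def add_caret_def)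
  show ?thesis
  proof (rule Set.set_eqI)
    fix w
    show "w \<in> leaves (add_caret d T k) \<longleftrightarrow> w \<in> (leaves T - {leaf_k}) \<union> carets"
    proof (cases "w \<in> carets")
      case True
      then show ?thesis using a[OF True] unfolding leaves_def add_caret_def by auto
    next
      case False
      then show ?thesis using lkn unfolding leaves_def add_caret_def by auto
    qed
  qed
qed

abbreviation "leaf_list \<equiv> sorted_list_of_set (leaves T)"
abbreviation "caret_list \<equiv> map (\<lambda>x. leaf_k @ [x]) [1..<d+1]"

lemma leaf_list_length: "length leaf_list = nleaves T" by (simp add: nleaves_def)

lemma leaf_list_split: "leaf_list = take (k - 1) leaf_list @ leaf_k # drop k leaf_list"
proof -
  have "k - 1 < length leaf_list" using k leaf_list_length by auto
  then have "leaf_list = take (k - 1) leaf_list @ leaf_list ! (k - 1) # drop (Suc (k - 1)) leaf_list" by (rule id_take_nth_drop)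
  moreover have "Suc (k - 1) = k" using k by auto
  ultimately show ?thesis by (simp add: leaf_def)
qed

lemma sorted_leaves_add_caret:
  "sorted_list_of_set (leaves (add_caret d T k)) = take (k - 1) leaf_list @ caret_list @ drop k leaf_list"
proof -
  let ?A = "take (k - 1) leaf_list" and ?C = "drop k leaf_list"
  have sw: "sorted_wrt (<) leaf_list" by simp
  then have sw2: "sorted_wrt (<) (?A @ leaf_k # ?C)" using leaf_list_split by simp
  then have sA: "sorted_wrt (<) ?A" and sC: "sorted_wrt (<) ?C" and Al: "\<forall>a\<in>set ?A. a < leaf_k"
    and lC: "\<forall>c\<in>set ?C. leaf_k < c" and AC: "\<forall>a\<in>set ?A. \<forall>c\<in>set ?C. a < c"
    by (auto simp: sorted_wrt_append)
  have sB: "sorted_wrt (<) caret_list"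
    unfolding sorted_wrt_map by (rule sorted_wrt_mono_rel[OF _ sorted_wrt_upt]) (simp add: list_less_snoc_mono)
  have AB: "\<forall>a\<in>set ?A. \<forall>b\<in>set caret_list. a < b"
    using Al list_less_snoc by (auto intro: order.strict_trans)
  have Cleaf: "set ?C \<subseteq> leaves T"
    using leaf_list_split finite_leaves[OF t] by (metis set_drop_subset sorted_list_of_set.set_sorted_key_list_of_set)
  have BC: "\<forall>b\<in>set caret_list. \<forall>c\<in>set ?C. b < c"
  proof (intro ballI)
    fix b c assume b: "b \<in> set caret_list" and c: "c \<in> set ?C"
    obtain x where bx: "b = leaf_k @ [x]" using b by auto
    have lc: "leaf_k < c" using lC c by blast
    have np: "c \<noteq> leaf_k @ v" for v
    proof
      assume cv: "c = leaf_k @ v"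
      have "c \<in> T" using c Cleaf leaves_sub by blast
      then have "v = []" using leaf_antichain[OF t leaf_k_in_leaves] cv by simp
      then show False using cv lc by simp
    qed
    show "b < c" using list_less_append_nonprefix[OF lc np] bx by simp
  qed
  have st: "sorted_wrt (<) (?A @ caret_list @ ?C)"
    using sA sB sC AB BC AC by (auto simp: sorted_wrt_append)
  have dl: "distinct (?A @ leaf_k # ?C)" using sw2 strict_sorted_iff by blast
  have setL: "set (?A @ leaf_k # ?C) = leaves T" using leaf_list_split finite_leaves[OF t]
    by (metis sorted_list_of_set.set_sorted_key_list_of_set)
  have "set (?A @ caret_list @ ?C) = (leaves T - {leaf_k}) \<union> carets"
  proof -
    have "set caret_list = carets" by auto
    moreover have "set ?A \<union> set ?C = leaves T - {leaf_k}" using dl setL by auto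
    ultimately show ?thesis by auto
  qed
  then have "set (?A @ caret_list @ ?C) = leaves (add_caret d T k)" using leaves_add_caret by simp
  then show ?thesis using st strict_sorted_iff
    by (metis sorted_list_of_set.idem_if_sorted_distinct)
qed

lemma nleaves_add_caret: "nleaves (add_caret d T k) = nleaves T + d - 1"
proof -
  have "nleaves (add_caret d T k) = length (take (k - 1) leaf_list @ caret_list @ drop k leaf_list)"
    by (simp only: nleaves_len sorted_leaves_add_caret)
  also have "\<dots> = (k - 1) + d + (nleaves T - k)" using k leaf_list_length by (auto simp del: upt_Suc simp: min_def)
  also have "\<dots> = nleaves T + d - 1" using k by auto
  finally show ?thesis .
qed

lemma leaf_add_caret_lo: "1 \<le> i \<Longrightarrow> i < k \<Longrightarrow> leaf (add_caret d T k) i = leaf T i"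
proof -
  assume i: "1 \<le> i" "i < k"
  have "length (take (k - 1) leaf_list) = k - 1" using k leaf_list_length by (auto simp: min_def)
  then show ?thesis using i unfolding leaf_def sorted_leaves_add_caret by (simp add: nth_append)
qed

lemma leaf_add_caret_mid: "j < d \<Longrightarrow> leaf (add_caret d T k) (k + j) = leaf_k @ [Suc j]"
proof -
  assume j: "j < d"
  have l: "length (take (k - 1) leaf_list) = k - 1" using k leaf_list_length by (auto simp: min_def)
  have e: "k + j - 1 = length (take (k - 1) leaf_list) + j" using k l by auto
  have "leaf (add_caret d T k) (k + j) = (take (k - 1) leaf_list @ caret_list @ drop k leaf_list) ! (length (take (k - 1) leaf_list) + j)"
    by (simp only: leaf_def sorted_leaves_add_caret e)
  also have "\<dots> = (caret_list @ drop k leaf_list) ! j" by (rule nth_append_length_plus)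
  also have "\<dots> = caret_list ! j" using j by (simp del: upt_Suc add: nth_append)
  also have "\<dots> = leaf_k @ [Suc j]" using j by (simp del: upt_Suc)
  finally show ?thesis .
qed

lemma leaf_add_caret_hi: "k + d \<le> i \<Longrightarrow> i \<le> nleaves T + d - 1 \<Longrightarrow> leaf (add_caret d T k) i = leaf T (i - d + 1)"
proof -
  assume i: "k + d \<le> i" "i \<le> nleaves T + d - 1"
  have l: "length (take (k - 1) leaf_list) = k - 1" using k leaf_list_length by (auto simp: min_def)
  have lb: "length caret_list = d" by (simp del: upt_Suc)
  have e: "i - 1 = length (take (k - 1) leaf_list) + (length caret_list + (i - k - d))" using i k l lb by auto
  have "leaf (add_caret d T k) i = (take (k - 1) leaf_list @ caret_list @ drop k leaf_list) ! (length (take (k - 1) leaf_list) + (length caret_list + (i - k - d)))"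
    by (simp only: leaf_def sorted_leaves_add_caret e)
  also have "\<dots> = drop k leaf_list ! (i - k - d)" by (simp only: nth_append_length_plus)
  also have "\<dots> = leaf_list ! (i - d)" using i k leaf_list_length by simp
  also have "\<dots> = leaf T (i - d + 1)" using i d by (simp add: leaf_def)
  finally show ?thesis .
qed

end

section \<open>The almost-automorphism of a triple\<close>

lemma wrD:
  assumes "(\<sigma>, fs) \<in> wr n G"
  shows "\<sigma> permutes {1..n}" "\<And>i. i \<in> {1..n} \<Longrightarrow> fs i \<in> G" "\<And>i. i \<notin> {1..n} \<Longrightarrow> fs i = id"
  using assms by (auto simp: wr_def)

lemma tripD:
  assumes "(Tm, (\<sigma>, fs), Tp) \<in> trip d G"
  shows "is_tree d Tm" "is_tree d Tp" "nleaves Tm = nleaves Tp" "\<sigma> permutes {1..nleaves Tp}"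
    "\<And>i. i \<in> {1..nleaves Tp} \<Longrightarrow> fs i \<in> G" "\<And>i. i \<notin> {1..nleaves Tp} \<Longrightarrow> fs i = id"
  using assms by (auto simp: trip_def wr_def)

lemma trip_mono: "G \<subseteq> H \<Longrightarrow> trip d G \<subseteq> trip d H"
  unfolding trip_def wr_def by blast

lemma aa_eval:
  assumes t: "is_tree d Tp" and i: "i \<in> {1..nleaves Tp}" and e: "\<eta> \<in> bd d"
  shows "aa d (Tm, (\<sigma>, fs), Tp) (bconc (leaf Tp i) \<eta>) = bconc (leaf Tm (\<sigma> i)) (aut_bd (fs i) \<eta>)"
proof -
  let ?\<xi> = "bconc (leaf Tp i) \<eta>"
  have x: "?\<xi> \<in> bd d" using bconc_bd[OF leaf_in_words[OF t i] e] .
  have th: "(THE i'. i' \<in> {1..nleaves Tp} \<and> bprefix (leaf Tp i') ?\<xi>) = i"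
  proof (rule the_equality)
    show "i \<in> {1..nleaves Tp} \<and> bprefix (leaf Tp i) ?\<xi>" using i bprefix_bconc by blast
    show "j = i" if "j \<in> {1..nleaves Tp} \<and> bprefix (leaf Tp j) ?\<xi>" for j
      using leaf_index_unique[OF t i, of j \<eta>] that by blast
  qed
  show ?thesis unfolding aa_def prod.case Let_def th bconc_shift using x by simp
qed

lemma aa_out: "\<xi> \<notin> bd d \<Longrightarrow> aa d t \<xi> = \<xi>"
  by (cases t) (auto simp: aa_def)

lemma aa_id_triple:
  assumes t: "is_tree d T"
  shows "aa d (T, (id, \<lambda>_. id), T) = id"
proof
  fix \<xi>
  show "aa d (T, (id, \<lambda>_. id), T) \<xi> = id \<xi>"
  proof (cases "\<xi> \<in> bd d")
    case True
    obtain i \<eta> where i: "i \<in> {1..nleaves T}" and e: "\<eta> \<in> bd d" and xe: "\<xi> = bconc (leaf T i) \<eta>"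
      using bd_leaf_decomp[OF t True] by blast
    show ?thesis unfolding xe using aa_eval[OF t i e, of T id] by simp
  qed (simp add: aa_out)
qed

lemma wmult_eq: "wmult (\<sigma>, fs) (\<tau>, gs) = (\<sigma> \<circ> \<tau>, \<lambda>i. fs (\<tau> i) \<circ> gs i)"
  by (simp add: wmult_def)

lemma wmult_trip:
  assumes a: "(Tm, f, Tp) \<in> trip d G" and b: "(Tp, g, Up) \<in> trip d G"
    and G_comp: "\<And>f g. f \<in> G \<Longrightarrow> g \<in> G \<Longrightarrow> f \<circ> g \<in> G"
  shows "(Tm, wmult f g, Up) \<in> trip d G"
proof -
  obtain \<sigma> fs \<tau> gs where fg: "f = (\<sigma>, fs)" "g = (\<tau>, gs)" by fastforce
  note A = tripD[OF a[unfolded fg]] and B = tripD[OF b[unfolded fg]]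
  have n: "nleaves Up = nleaves Tp" using B(3) by simp
  have p: "\<sigma> \<circ> \<tau> permutes {1..nleaves Up}" using permutes_compose[OF B(4)] A(4) n by simp
  have "fs (\<tau> i) \<circ> gs i \<in> G" if "i \<in> {1..nleaves Up}" for i
    using G_comp A(5) B(5) permutes_in_image[OF B(4)] that n by simp
  moreover have "fs (\<tau> i) \<circ> gs i = id" if "i \<notin> {1..nleaves Up}" for i
    using that permutes_not_in[OF B(4)] A(6) B(6) n by simp
  ultimately show ?thesis
    unfolding fg wmult_eq using A(1) B(2) A(3) n p by (auto simp: trip_def wr_def)
qed

lemma aa_comp:
  assumes a: "(Tm, f, Tp) \<in> trip d (AutSet d)" and b: "(Tp, g, Up) \<in> trip d (AutSet d)"
  shows "aa d (Tm, f, Tp) \<circ> aa d (Tp, g, Up) = aa d (Tm, wmult f g, Up)"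
proof
  fix \<xi>
  obtain \<sigma> fs \<tau> gs where fg: "f = (\<sigma>, fs)" "g = (\<tau>, gs)" by fastforce
  note A = tripD[OF a[unfolded fg]] and B = tripD[OF b[unfolded fg]]
  show "(aa d (Tm, f, Tp) \<circ> aa d (Tp, g, Up)) \<xi> = aa d (Tm, wmult f g, Up) \<xi>"
  proof (cases "\<xi> \<in> bd d")
    case True
    obtain i \<eta> where i: "i \<in> {1..nleaves Up}" and e: "\<eta> \<in> bd d" and xe: "\<xi> = bconc (leaf Up i) \<eta>"
      using bd_leaf_decomp[OF B(2) True] by blast
    have ti: "\<tau> i \<in> {1..nleaves Tp}" using permutes_in_image[OF B(4)] i B(3) by simp
    have g: "gs i \<in> AutSet d" and f: "fs (\<tau> i) \<in> AutSet d" using B(5) i A(5) ti by simp_all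
    have "aa d (Tp, g, Up) \<xi> = bconc (leaf Tp (\<tau> i)) (aut_bd (gs i) \<eta>)"
      unfolding xe fg using aa_eval[OF B(2) i e] .
    moreover have "aa d (Tm, f, Tp) (bconc (leaf Tp (\<tau> i)) (aut_bd (gs i) \<eta>))
        = bconc (leaf Tm (\<sigma> (\<tau> i))) (aut_bd (fs (\<tau> i)) (aut_bd (gs i) \<eta>))"
      unfolding fg using aa_eval[OF A(2) ti aut_bd_in_bd[OF g e]] .
    moreover have "aa d (Tm, wmult f g, Up) \<xi> = bconc (leaf Tm (\<sigma> (\<tau> i))) (aut_bd (fs (\<tau> i) \<circ> gs i) \<eta>)"
      unfolding fg wmult_eq xe using aa_eval[OF B(2) i e] by simp
    ultimately show ?thesis using aut_bd_comp[OF f g e] by simp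
  qed (simp add: aa_out)
qed

definition winv :: "nat \<Rightarrow> nat \<Rightarrow> wel \<Rightarrow> wel" where
  "winv d n g = (case g of (\<sigma>, fs) \<Rightarrow>
     (inv_into UNIV \<sigma>, \<lambda>i. if i \<in> {1..n} then autinv d (fs (inv_into UNIV \<sigma> i)) else id))"

lemma winv_trip:
  assumes a: "(Tm, (\<sigma>, fs), Tp) \<in> trip d G" and G_inv: "\<And>f. f \<in> G \<Longrightarrow> autinv d f \<in> G"
  shows "(Tp, winv d (nleaves Tp) (\<sigma>, fs), Tm) \<in> trip d G"
proof -
  note A = tripD[OF a]
  have p: "inv_into UNIV \<sigma> permutes {1..nleaves Tm}" using permutes_inv[OF A(4)] A(3) by simp
  have "autinv d (fs (inv_into UNIV \<sigma> i)) \<in> G" if "i \<in> {1..nleaves Tp}" for i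
    using permutes_in_image[OF permutes_inv[OF A(4)]] that A(5) G_inv by blast
  then show ?thesis unfolding winv_def using A(1-3) p by (auto simp: trip_def wr_def)
qed

lemma winv_wmult:
  assumes a: "(Tm, (\<sigma>, fs), Tp) \<in> trip d (AutSet d)"
  shows "wmult (winv d (nleaves Tp) (\<sigma>, fs)) (\<sigma>, fs) = (id, \<lambda>_. id)"
proof -
  note A = tripD[OF a]
  have "(if \<sigma> i \<in> {1..nleaves Tp} then autinv d (fs (inv_into UNIV \<sigma> (\<sigma> i))) else id) \<circ> fs i = id" for i
  proof (cases "i \<in> {1..nleaves Tp}")
    case True
    then show ?thesis using permutes_in_image[OF A(4)] permutes_inverses(2)[OF A(4)]
        autinv_AutSet(2)[OF A(5)[OF True]] by simp
  next
    case False
    then have "\<sigma> i \<notin> {1..nleaves Tp}" using permutes_not_in[OF A(4) False] by simp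
    then show ?thesis using A(6)[OF False] by (subst if_not_P) auto
  qed
  then show ?thesis unfolding winv_def prod.case wmult_eq permutes_inv_o(2)[OF A(4)] by simp
qed

lemma aa_left_inverse:
  assumes a: "a \<in> trip d G" and G_Aut: "G \<subseteq> AutSet d" and G_inv: "\<And>f. f \<in> G \<Longrightarrow> autinv d f \<in> G"
  shows "\<exists>b\<in>trip d G. aa d b \<circ> aa d a = id"
proof -
  obtain Am \<sigma> fs Ap where ae: "a = (Am, (\<sigma>, fs), Ap)" by (cases a) auto
  have aA: "(Am, (\<sigma>, fs), Ap) \<in> trip d (AutSet d)" using a ae trip_mono[OF G_Aut] by blast
  let ?b = "(Ap, winv d (nleaves Ap) (\<sigma>, fs), Am)"
  have b: "?b \<in> trip d G" using winv_trip[OF a[unfolded ae] G_inv] .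
  have "aa d ?b \<circ> aa d a = aa d (Ap, wmult (winv d (nleaves Ap) (\<sigma>, fs)) (\<sigma>, fs), Ap)"
    using aa_comp b trip_mono[OF G_Aut] aA ae by blast
  also have "\<dots> = id"
    unfolding winv_wmult[OF aA] using aa_id_triple[OF tripD(2)[OF aA]] .
  finally show ?thesis using b by blast
qed

lemma aut_bd_0: "f \<in> AutSet d \<Longrightarrow> \<eta> \<in> bd d \<Longrightarrow> aut_bd f \<eta> 0 = rootperm d f (\<eta> 0)"
  using AutSet_singleton[of f d "\<eta> 0"] by (simp add: aut_bd_def bd_def)

text \<open>With at least two letters, the image of a cone determines its apex: otherwise the
  root permutation would be constant on the letters.\<close>

lemma bconc_aut_bd_length_le:
  assumes d: "d \<ge> 2" and f: "f \<in> AutSet d"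
    and eq: "\<And>\<eta>. \<eta> \<in> bd d \<Longrightarrow> bconc u (aut_bd f \<eta>) = bconc u' (aut_bd g \<eta>)"
  shows "length u' \<le> length u"
proof (rule ccontr)
  assume "\<not> length u' \<le> length u"
  then have l: "length u < length u'" by simp
  let ?p = "length u"
  have v: "rootperm d f (\<eta> 0) = u' ! ?p" if "\<eta> \<in> bd d" for \<eta>
  proof -
    have "bconc u (aut_bd f \<eta>) ?p = bconc u' (aut_bd g \<eta>) ?p" using eq[OF that] by simp
    then show ?thesis using l aut_bd_0[OF f that] by (simp add: bconc_def)
  qed
  have "(\<lambda>_. 1) \<in> bd d" "(\<lambda>_. 2) \<in> bd d" using d by (auto simp: bd_def)
  then have "rootperm d f 1 = rootperm d f 2" using v[of "\<lambda>_. 1"] v[of "\<lambda>_. 2"] by simp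
  moreover have "(1::nat) \<in> {1..d}" "(2::nat) \<in> {1..d}" using d by auto
  ultimately show False
    using permutes_inj[OF rootperm_permutes[OF f]] by (metis inj_eq numeral_One numeral_eq_iff semiring_norm(85))
qed

lemma bconc_aut_bd_inject:
  assumes d: "d \<ge> 2" and f: "f \<in> AutSet d" and g: "g \<in> AutSet d"
    and eq: "\<And>\<eta>. \<eta> \<in> bd d \<Longrightarrow> bconc u (aut_bd f \<eta>) = bconc u' (aut_bd g \<eta>)"
  shows "u = u'" "f = g"
proof -
  have "length u' \<le> length u" using bconc_aut_bd_length_le[OF d f eq] .
  moreover have "length u \<le> length u'"
    by (rule bconc_aut_bd_length_le[OF d g, of u' u f]) (simp add: eq)
  ultimately have l: "length u = length u'" by simp
  have b1: "(\<lambda>_. 1) \<in> bd d" using d by (auto simp: bd_def)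
  have "u ! j = u' ! j" if "j < length u" for j
  proof -
    have "bconc u (aut_bd f (\<lambda>_. 1)) j = bconc u' (aut_bd g (\<lambda>_. 1)) j" using eq[OF b1] by simp
    then show ?thesis using that l by (simp add: bconc_def)
  qed
  then show uu: "u = u'" using l by (simp add: list_eq_iff_nth_eq)
  have "aut_bd f \<eta> = aut_bd g \<eta>" if e: "\<eta> \<in> bd d" for \<eta>
  proof -
    have "(\<lambda>j. bconc u (aut_bd f \<eta>) (j + length u)) = (\<lambda>j. bconc u (aut_bd g \<eta>) (j + length u))"
      using eq[OF e] uu by simp
    then show ?thesis by simp
  qed
  then show "f = g" using aut_bd_inject[of d f g] d f g by simp
qed

lemma triple_eq_if_aa_eq:
  assumes d: "d \<ge> 2"
    and s: "(Tm, (\<sigma>, fs), Tp) \<in> trip d (AutSet d)" and t: "(Sm, (\<tau>, gs), Tp) \<in> trip d (AutSet d)"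
    and e: "aa d (Tm, (\<sigma>, fs), Tp) = aa d (Sm, (\<tau>, gs), Tp)"
  shows "(Tm, (\<sigma>, fs), Tp) = (Sm, (\<tau>, gs), Tp)"
proof -
  note S = tripD[OF s] and T = tripD[OF t]
  let ?n = "nleaves Tp"
  have key: "leaf Tm (\<sigma> i) = leaf Sm (\<tau> i) \<and> fs i = gs i" if i: "i \<in> {1..?n}" for i
  proof -
    have "bconc (leaf Tm (\<sigma> i)) (aut_bd (fs i) \<eta>) = bconc (leaf Sm (\<tau> i)) (aut_bd (gs i) \<eta>)"
      if "\<eta> \<in> bd d" for \<eta>
      using aa_eval[OF S(2) i that, of Tm \<sigma> fs] aa_eval[OF T(2) i that, of Sm \<tau> gs] e by simp
    then show ?thesis using bconc_aut_bd_inject[OF d S(5)[OF i] T(5)[OF i]] by blast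
  qed
  have imS: "\<sigma> ` {1..?n} = {1..?n}" and imT: "\<tau> ` {1..?n} = {1..?n}"
    using permutes_image[OF S(4)] permutes_image[OF T(4)] .
  have "leaves Tm = (\<lambda>i. leaf Tm (\<sigma> i)) ` {1..?n}"
    using leaves_eq_leaf_image[OF S(1)] S(3) imS by (metis image_image)
  also have "\<dots> = (\<lambda>i. leaf Sm (\<tau> i)) ` {1..?n}" using key by (intro image_cong) auto
  also have "\<dots> = leaves Sm"
    using leaves_eq_leaf_image[OF T(1)] T(3) imT by (metis image_image)
  finally have Tm_Sm: "Tm = Sm" using tree_eq_leaves[OF S(1) T(1)] by simp
  have "\<sigma> i = \<tau> i" for i
  proof (cases "i \<in> {1..?n}")
    case True
    have "\<sigma> i \<in> {1..?n}" "\<tau> i \<in> {1..?n}" using True imS imT by auto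
    then show ?thesis using leaf_inj[OF S(1), of "\<sigma> i" "\<tau> i"] key[OF True] Tm_Sm S(3) by simp
  next
    case False
    then show ?thesis using permutes_not_in[OF S(4)] permutes_not_in[OF T(4)] by simp
  qed
  moreover have "fs i = gs i" for i
    using key[of i] S(6)[of i] T(6)[of i] by (cases "i \<in> {1..?n}") auto
  ultimately show ?thesis using Tm_Sm by auto
qed

section \<open>Cloning\<close>

text \<open>The map of the indices of the leaves other than the s-th when a d-caret is inserted at the
  s-th leaf; the block s..s+d-1 is taken by the new leaves.\<close>

definition stretch :: "nat \<Rightarrow> nat \<Rightarrow> nat \<Rightarrow> nat" where
  "stretch d s m = (if m < s then m else m + d - 1)"

lemma stretch_notin_block: "d \<ge> 1 \<Longrightarrow> m \<noteq> s \<Longrightarrow> stretch d s m \<notin> {s..<s + d}"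
  by (auto simp: stretch_def)

lemma stretch_image_Un_block:
  assumes d: "d \<ge> 1" and s: "s \<in> {1..n}"
  shows "stretch d s ` ({1..n} - {s}) \<union> {s..<s + d} = {1..n + d - 1}"
proof
  show "stretch d s ` ({1..n} - {s}) \<union> {s..<s + d} \<subseteq> {1..n + d - 1}"
    using d s by (auto simp: stretch_def)
  show "{1..n + d - 1} \<subseteq> stretch d s ` ({1..n} - {s}) \<union> {s..<s + d}"
  proof
    fix i assume i: "i \<in> {1..n + d - 1}"
    consider "i < s" | "s \<le> i \<and> i < s + d" | "s + d \<le> i" by linarith
    then show "i \<in> stretch d s ` ({1..n} - {s}) \<union> {s..<s + d}"
    proof cases
      case 1
      then have "i = stretch d s i" by (simp add: stretch_def)
      then show ?thesis using 1 i s by auto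
    next
      case 3
      then have "i = stretch d s (i - d + 1)" using d by (simp add: stretch_def)
      moreover have "i - d + 1 \<in> {1..n} - {s}" using 3 i d by auto
      ultimately show ?thesis by blast
    qed simp
  qed
qed

lemma leaf_add_caret_stretch:
  assumes t: "is_tree d T" and s: "s \<in> {1..nleaves T}" and m: "m \<in> {1..nleaves T}"
    and ms: "m \<noteq> s" and d: "d \<ge> 1"
  shows "leaf (add_caret d T s) (stretch d s m) = leaf T m"
proof (cases "m < s")
  case True
  then show ?thesis using leaf_add_caret_lo[OF t s d, of m] m by (simp add: stretch_def)
next
  case False
  then have "s + d \<le> m + d - 1" "m + d - 1 \<le> nleaves T + d - 1" using ms m d by auto
  then show ?thesis using leaf_add_caret_hi[OF t s d, of "m + d - 1"] False d by (simp add: stretch_def)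
qed

lemma varsigma_stretch:
  "d \<ge> 1 \<Longrightarrow> m \<in> {1..n} \<Longrightarrow> m \<noteq> k \<Longrightarrow> varsigma d n k \<sigma> (stretch d k m) = stretch d (\<sigma> k) (\<sigma> m)"
  by (auto simp: varsigma_def stretch_def Let_def)

lemma varsigma_block: "k \<le> i \<Longrightarrow> i < k + d \<Longrightarrow> varsigma d n k \<sigma> i = \<sigma> k + (i - k)"
  by (simp add: varsigma_def)

lemma shiftperm_block: "k \<le> i \<Longrightarrow> i < k + d \<Longrightarrow> shiftperm d k \<rho> i = k + \<rho> (i - k + 1) - 1"
  by (simp add: shiftperm_def)

lemma shiftperm_outside: "i \<notin> {k..<k + d} \<Longrightarrow> shiftperm d k \<rho> i = i"
  unfolding shiftperm_def by auto

lemma shiftperm_permutes: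
  assumes r: "\<rho> permutes {1..d}" and k: "1 \<le> k" "k \<le> n"
  shows "shiftperm d k \<rho> permutes {1..n + d - 1}"
proof -
  have in_block: "\<rho> (i - k + 1) \<in> {1..d}" if "i \<in> {k..<k+d}" for i
  proof -
    have "i - k + 1 \<in> {1..d}" using that by auto
    then show ?thesis using permutes_in_image[OF r] by blast
  qed
  have inj: "inj_on (shiftperm d k \<rho>) {k..<k+d}"
  proof (rule inj_onI)
    fix a b assume a: "a \<in> {k..<k+d}" and b: "b \<in> {k..<k+d}" and e: "shiftperm d k \<rho> a = shiftperm d k \<rho> b"
    have "\<rho> (a - k + 1) = \<rho> (b - k + 1)"
      using e a b in_block[OF a] in_block[OF b] by (auto simp: shiftperm_def) arith
    then have "a - k + 1 = b - k + 1" using permutes_inj[OF r] by (simp add: inj_eq)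
    then show "a = b" using a b by auto
  qed
  have "shiftperm d k \<rho> ` {k..<k+d} = {k..<k+d}"
  proof (rule endo_inj_surj[OF _ _ inj])
    show "shiftperm d k \<rho> ` {k..<k+d} \<subseteq> {k..<k+d}"
      using in_block by (force simp: shiftperm_def)
  qed simp
  then have "shiftperm d k \<rho> permutes {k..<k+d}"
    using inj by (intro bij_imp_permutes) (auto simp: bij_betw_def shiftperm_def)
  moreover have "{k..<k+d} \<subseteq> {1..n + d - 1}" using k by auto
  ultimately show ?thesis by (rule permutes_subset)
qed

text \<open>Outside the two blocks, the permutation varsigma is sigma conjugated by the stretches.\<close>

lemma varsigma_permutes:
  assumes s: "\<sigma> permutes {1..n}" and k: "k \<in> {1..n}" and d: "d \<ge> 1"
  shows "varsigma d n k \<sigma> permutes {1..n + d - 1}"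
proof -
  let ?v = "varsigma d n k \<sigma>" and ?M = "{1..n} - {k}" and ?B = "{k..<k + d}"
  have sk: "\<sigma> k \<in> {1..n}" using permutes_in_image[OF s] k by blast
  have \<sigma>M: "\<sigma> ` ?M = {1..n} - {\<sigma> k}"
    using permutes_image[OF s] permutes_inj[OF s] k by (auto simp: inj_eq)
  have v_stretch: "?v ` stretch d k ` ?M = stretch d (\<sigma> k) ` ({1..n} - {\<sigma> k})"
  proof -
    have "?v ` stretch d k ` ?M = (\<lambda>m. stretch d (\<sigma> k) (\<sigma> m)) ` ?M"
      unfolding image_image using varsigma_stretch[OF d] by (intro image_cong) auto
    also have "\<dots> = stretch d (\<sigma> k) ` ({1..n} - {\<sigma> k})"
      unfolding \<sigma>M[symmetric] image_image ..
    finally show ?thesis .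
  qed
  have v_block: "?v ` ?B = {\<sigma> k..<\<sigma> k + d}"
  proof -
    have "?v ` ?B = (\<lambda>i. \<sigma> k + (i - k)) ` ?B" using varsigma_block by (intro image_cong) auto
    also have "\<dots> = {\<sigma> k..<\<sigma> k + d}"
    proof -
      have "x \<in> (\<lambda>i. \<sigma> k + (i - k)) ` ?B" if "x \<in> {\<sigma> k..<\<sigma> k + d}" for x
        using that by (auto simp: image_iff intro!: bexI[of _ "x - \<sigma> k + k"])
      then show ?thesis by auto
    qed
    finally show ?thesis .
  qed
  have "?v ` {1..n + d - 1} = ?v ` (stretch d k ` ?M \<union> ?B)"
    using stretch_image_Un_block[OF d k] by simp
  also have "\<dots> = stretch d (\<sigma> k) ` ({1..n} - {\<sigma> k}) \<union> {\<sigma> k..<\<sigma> k + d}"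
    by (simp only: image_Un v_stretch v_block)
  also have "\<dots> = {1..n + d - 1}" by (rule stretch_image_Un_block[OF d sk])
  finally have img: "?v ` {1..n + d - 1} = {1..n + d - 1}" .
  then have "inj_on ?v {1..n + d - 1}" by (intro finite_surj_inj) simp_all
  with img have "bij_betw ?v {1..n + d - 1} {1..n + d - 1}"
    by (simp add: bij_betw_def)
  moreover have "?v i = i" if "i \<notin> {1..n + d - 1}" for i
    using that k by (auto simp: varsigma_def)
  ultimately show ?thesis by (rule bij_imp_permutes)
qed

definition clone_sections :: "nat \<Rightarrow> nat \<Rightarrow> nat \<Rightarrow> (nat \<Rightarrow> autf) \<Rightarrow> nat \<Rightarrow> autf" where
  "clone_sections d n k fs = (\<lambda>i. if 1 \<le> i \<and> i < k then fs i
     else if k \<le> i \<and> i < k + d then sect d (fs k) (i - k + 1)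
     else if k + d \<le> i \<and> i \<le> n + d - 1 then fs (i - d + 1)
     else id)"

lemma clone_eq:
  "clone d n k (\<sigma>, fs) = (varsigma d n k \<sigma> \<circ> shiftperm d k (rootperm d (fs k)), clone_sections d n k fs)"
  by (simp add: clone_def clone_sections_def)

lemma clone_sections_stretch:
  "d \<ge> 1 \<Longrightarrow> m \<in> {1..n} \<Longrightarrow> m \<noteq> k \<Longrightarrow> clone_sections d n k fs (stretch d k m) = fs m"
  by (auto simp: clone_sections_def stretch_def)

lemma clone_sections_block:
  "k \<le> i \<Longrightarrow> i < k + d \<Longrightarrow> clone_sections d n k fs i = sect d (fs k) (i - k + 1)"
  by (simp add: clone_sections_def)

lemma clone_sections_outside:
  "1 \<le> k \<Longrightarrow> k \<le> n \<Longrightarrow> i \<notin> {1..n + d - 1} \<Longrightarrow> clone_sections d n k fs i = id"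
  by (auto simp: clone_sections_def)

lemma clone_wr:
  assumes G_Aut: "G \<subseteq> AutSet d" and ss: "self_similar d G" and d: "d \<ge> 1"
    and k: "1 \<le> k" "k \<le> n" and g: "g \<in> wr n G"
  shows "clone d n k g \<in> wr (n + d - 1) G"
proof -
  obtain \<sigma> fs where gg: "g = (\<sigma>, fs)" by fastforce
  note W = wrD[OF g[unfolded gg]]
  have k': "k \<in> {1..n}" using k by simp
  have fk: "fs k \<in> G" using W(2) k' .
  have "varsigma d n k \<sigma> \<circ> shiftperm d k (rootperm d (fs k)) permutes {1..n + d - 1}"
    using permutes_compose[OF shiftperm_permutes[OF rootperm_permutes k] varsigma_permutes[OF W(1) k' d]]
      fk G_Aut by blast
  moreover have "clone_sections d n k fs i \<in> G" if "i \<in> {1..n + d - 1}" for i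
  proof -
    from that consider m where "m \<in> {1..n} - {k}" "i = stretch d k m" | "i \<in> {k..<k + d}"
      using stretch_image_Un_block[OF d k'] by blast
    then show ?thesis
    proof cases
      case 1
      then show ?thesis using clone_sections_stretch[OF d] W(2) by auto
    next
      case 2
      then have "i - k + 1 \<in> {1..d}" by auto
      then show ?thesis using 2 fk ss clone_sections_block unfolding self_similar_def by auto
    qed
  qed
  ultimately show ?thesis unfolding gg clone_eq wr_def using clone_sections_outside[OF k] by auto
qed

lemma expand_trip:
  assumes G_Aut: "G \<subseteq> AutSet d" and ss: "self_similar d G" and d: "d \<ge> 1"
    and tr: "(Tm, (\<sigma>, fs), Tp) \<in> trip d G" and k: "k \<in> {1..nleaves Tp}"
  shows "(add_caret d Tm (\<sigma> k), clone d (nleaves Tp) k (\<sigma>, fs), add_caret d Tp k) \<in> trip d G"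
proof -
  note D = tripD[OF tr]
  have sk: "\<sigma> k \<in> {1..nleaves Tm}" using D(3) permutes_in_image[OF D(4)] k by simp
  have "(\<sigma>, fs) \<in> wr (nleaves Tp) G" using tr by (simp add: trip_def)
  then have "clone d (nleaves Tp) k (\<sigma>, fs) \<in> wr (nleaves Tp + d - 1) G"
    using clone_wr[OF G_Aut ss d] k by auto
  then show ?thesis
    using add_caret_tree[OF D(1) sk d] add_caret_tree[OF D(2) k d]
      nleaves_add_caret[OF D(1) sk d] nleaves_add_caret[OF D(2) k d] D(3)
    by (auto simp: trip_def)
qed

text \<open>Below a new leaf of the range tree the expanded triple acts by a section of the cloned
  automorphism, whose root permutation was moved into the permutation; below the old leaves
  nothing changes.\<close>

context
  fixes d :: nat and Tm Tp :: tree and \<sigma> :: "nat \<Rightarrow> nat" and fs :: "nat \<Rightarrow> autf" and k :: nat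
  assumes d: "d \<ge> 1" and tr: "(Tm, (\<sigma>, fs), Tp) \<in> trip d (AutSet d)" and k: "k \<in> {1..nleaves Tp}"
begin

abbreviation "expanded \<equiv> (add_caret d Tm (\<sigma> k), clone d (nleaves Tp) k (\<sigma>, fs), add_caret d Tp k)"

lemma aa_expanded_stretch:
  assumes m: "m \<in> {1..nleaves Tp} - {k}" and e: "\<eta> \<in> bd d"
  shows "aa d expanded (bconc (leaf (add_caret d Tp k) (stretch d k m)) \<eta>)
       = aa d (Tm, (\<sigma>, fs), Tp) (bconc (leaf (add_caret d Tp k) (stretch d k m)) \<eta>)"
proof -
  note D = tripD[OF tr]
  let ?n = "nleaves Tp" and ?i = "stretch d k m"
  have sk: "\<sigma> k \<in> {1..nleaves Tm}" and sm: "\<sigma> m \<in> {1..nleaves Tm}"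
    using D(3) permutes_in_image[OF D(4)] k m by auto
  have smk: "\<sigma> m \<noteq> \<sigma> k" using permutes_inj[OF D(4)] m by (auto simp: inj_eq)
  have "?i \<in> stretch d k ` ({1..nleaves Tp} - {k})" using m by blast
  then have i: "?i \<in> {1..nleaves (add_caret d Tp k)}"
    unfolding nleaves_add_caret[OF D(2) k d] stretch_image_Un_block[OF d k, symmetric] by blast
  have "(varsigma d ?n k \<sigma> \<circ> shiftperm d k (rootperm d (fs k))) ?i = stretch d (\<sigma> k) (\<sigma> m)"
    using shiftperm_outside[OF stretch_notin_block[OF d]] varsigma_stretch[OF d] m by auto
  then have "aa d expanded (bconc (leaf (add_caret d Tp k) ?i) \<eta>) = bconc (leaf Tm (\<sigma> m)) (aut_bd (fs m) \<eta>)"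
    unfolding clone_eq aa_eval[OF add_caret_tree[OF D(2) k d] i e]
    using leaf_add_caret_stretch[OF D(1) sk sm smk d] clone_sections_stretch[OF d] m by auto
  also have "\<dots> = aa d (Tm, (\<sigma>, fs), Tp) (bconc (leaf (add_caret d Tp k) ?i) \<eta>)"
    using leaf_add_caret_stretch[OF D(2) k _ _ d, of m] aa_eval[OF D(2) _ e, of m] m by auto
  finally show ?thesis .
qed

lemma aa_expanded_block:
  assumes j: "j < d" and e: "\<eta> \<in> bd d"
  shows "aa d expanded (bconc (leaf (add_caret d Tp k) (k + j)) \<eta>)
       = aa d (Tm, (\<sigma>, fs), Tp) (bconc (leaf (add_caret d Tp k) (k + j)) \<eta>)"
proof -
  note D = tripD[OF tr]
  let ?n = "nleaves Tp" and ?\<rho> = "rootperm d (fs k)"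
  have sk: "\<sigma> k \<in> {1..nleaves Tm}" using D(3) permutes_in_image[OF D(4)] k by simp
  have fk: "fs k \<in> AutSet d" using D(5)[OF k] .
  have sj: "Suc j \<in> {1..d}" using j by simp
  have r: "?\<rho> (Suc j) \<in> {1..d}" using permutes_in_image[OF rootperm_permutes[OF fk]] sj by blast
  have i: "k + j \<in> {1..nleaves (add_caret d Tp k)}"
    using k j nleaves_add_caret[OF D(2) k d] by auto
  have "(varsigma d ?n k \<sigma> \<circ> shiftperm d k ?\<rho>) (k + j) = \<sigma> k + (?\<rho> (Suc j) - 1)"
    using shiftperm_block[of k "k + j" d ?\<rho>] varsigma_block[of k _ d ?n \<sigma>] j r by auto
  then have "aa d expanded (bconc (leaf (add_caret d Tp k) (k + j)) \<eta>)
      = bconc (leaf Tm (\<sigma> k) @ [?\<rho> (Suc j)]) (aut_bd (sect d (fs k) (Suc j)) \<eta>)"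
    unfolding clone_eq aa_eval[OF add_caret_tree[OF D(2) k d] i e]
    using leaf_add_caret_mid[OF D(1) sk d, of "?\<rho> (Suc j) - 1"] r clone_sections_block[of k "k + j" d] j
    by auto
  also have "\<dots> = bconc (leaf Tm (\<sigma> k)) (aut_bd (fs k) (bconc [Suc j] \<eta>))"
    unfolding aut_bd_bconc_singleton[OF fk sj e] by (simp add: bconc_append)
  also have "\<dots> = aa d (Tm, (\<sigma>, fs), Tp) (bconc (leaf (add_caret d Tp k) (k + j)) \<eta>)"
    unfolding leaf_add_caret_mid[OF D(2) k d j] bconc_append
    using aa_eval[OF D(2) k bconc_bd[of "[Suc j]" d \<eta>]] sj e by simp
  finally show ?thesis .
qed

lemma aa_expanded: "aa d expanded = aa d (Tm, (\<sigma>, fs), Tp)"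
proof
  fix \<xi>
  show "aa d expanded \<xi> = aa d (Tm, (\<sigma>, fs), Tp) \<xi>"
  proof (cases "\<xi> \<in> bd d")
    case True
    note D = tripD[OF tr]
    obtain i \<eta> where i: "i \<in> {1..nleaves Tp + d - 1}" and e: "\<eta> \<in> bd d"
      and xe: "\<xi> = bconc (leaf (add_caret d Tp k) i) \<eta>"
      using bd_leaf_decomp[OF add_caret_tree[OF D(2) k d] True] nleaves_add_caret[OF D(2) k d] by auto
    from i consider m where "m \<in> {1..nleaves Tp} - {k}" "i = stretch d k m" | j where "j < d" "i = k + j"
      using stretch_image_Un_block[OF d k] by (metis Un_iff atLeastLessThan_iff imageE le_Suc_ex add_less_cancel_left)
    then show ?thesis
      by cases (use xe aa_expanded_stretch[OF _ e] aa_expanded_block[OF _ e] in auto)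
  qed (simp add: aa_out)
qed

end

section \<open>Expansions and their equivalence classes\<close>

lemma Texp_trip_aa:
  assumes d: "d \<ge> 1" and xy: "(x, y) \<in> Texp d"
  shows "x \<in> trip d (AutSet d)" "y \<in> trip d (AutSet d)" "aa d y = aa d x"
proof -
  obtain Tm \<sigma> fs Tp k where x: "x = (Tm, (\<sigma>, fs), Tp)"
    and y: "y = (add_caret d Tm (\<sigma> k), clone d (nleaves Tp) k (\<sigma>, fs), add_caret d Tp k)"
    and tr: "(Tm, (\<sigma>, fs), Tp) \<in> trip d (AutSet d)" and k: "k \<in> {1..nleaves Tp}"
    using xy unfolding Texp_def by fastforce
  show "x \<in> trip d (AutSet d)" using tr x by simp
  show "y \<in> trip d (AutSet d)" using expand_trip[OF subset_refl self_similar_AutSet d tr k] y by simp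
  show "aa d y = aa d x" using aa_expanded[OF d tr k] x y by simp
qed

lemma Teq_trip_aa:
  assumes d: "d \<ge> 1" and xy: "(x, y) \<in> Teq d" and x: "x \<in> trip d (AutSet d)"
  shows "y \<in> trip d (AutSet d) \<and> aa d y = aa d x"
  using xy[unfolded Teq_def]
proof (induction rule: rtrancl_induct)
  case (step y z)
  then show ?case using Texp_trip_aa[OF d, of y z] Texp_trip_aa[OF d, of z y] by auto
qed (use x in simp)

lemma rtrancl_Texp_Teq:
  assumes "(x, y) \<in> (Texp d)\<^sup>*"
  shows "(x, y) \<in> Teq d" "(y, x) \<in> Teq d"
proof -
  show "(x, y) \<in> Teq d" unfolding Teq_def using rtrancl_mono[of "Texp d"] assms by blast
  have "(y, x) \<in> ((Texp d)\<inverse>)\<^sup>*" using assms by (simp add: rtrancl_converse)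
  then show "(y, x) \<in> Teq d" unfolding Teq_def using rtrancl_mono[of "(Texp d)\<inverse>"] by blast
qed

lemma expansion_at_range_leaf:
  assumes G_Aut: "G \<subseteq> AutSet d" and ss: "self_similar d G" and d: "d \<ge> 1"
    and t: "t \<in> trip d G" and l: "l \<in> leaves (snd (snd t))"
  shows "\<exists>t'. (t, t') \<in> Texp d \<and> t' \<in> trip d G \<and> snd (snd t') = snd (snd t) \<union> {l @ [x] | x. x \<in> {1..d}}"
proof -
  obtain Tm \<sigma> fs Tp where tt: "t = (Tm, (\<sigma>, fs), Tp)" by (cases t) auto
  note tr = t[unfolded tt]
  have "l \<in> leaves Tp" using l tt by simp
  then obtain k where k: "k \<in> {1..nleaves Tp}" "leaf Tp k = l"
    using leaf_surj[OF tripD(2)[OF tr]] by blast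
  let ?t1 = "(add_caret d Tm (\<sigma> k), clone d (nleaves Tp) k (\<sigma>, fs), add_caret d Tp k)"
  have "(t, ?t1) \<in> Texp d"
    unfolding Texp_def using trip_mono[OF G_Aut] tr tt k(1) by fastforce
  then show ?thesis using expand_trip[OF G_Aut ss d tr k(1)] k(2) tt
    by (intro exI[of _ ?t1]) (auto simp: add_caret_def)
qed

lemma expansion_at_domain_leaf:
  assumes G_Aut: "G \<subseteq> AutSet d" and ss: "self_similar d G" and d: "d \<ge> 1"
    and t: "t \<in> trip d G" and l: "l \<in> leaves (fst t)"
  shows "\<exists>t'. (t, t') \<in> Texp d \<and> t' \<in> trip d G \<and> fst t' = fst t \<union> {l @ [x] | x. x \<in> {1..d}}"
proof -
  obtain Tm \<sigma> fs Tp where tt: "t = (Tm, (\<sigma>, fs), Tp)" by (cases t) auto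
  note tr = t[unfolded tt] and D = tripD[OF t[unfolded tt]]
  have "l \<in> leaves Tm" using l tt by simp
  then obtain j where j: "j \<in> {1..nleaves Tm}" "leaf Tm j = l"
    using leaf_surj[OF D(1)] by blast
  obtain k where k: "k \<in> {1..nleaves Tp}" "\<sigma> k = j"
    using j(1) D(3) permutes_image[OF D(4)] by (metis imageE)
  let ?t1 = "(add_caret d Tm (\<sigma> k), clone d (nleaves Tp) k (\<sigma>, fs), add_caret d Tp k)"
  have "(t, ?t1) \<in> Texp d"
    unfolding Texp_def using trip_mono[OF G_Aut] tr tt k(1) by fastforce
  then show ?thesis using expand_trip[OF G_Aut ss d tr k(1)] k(2) j(2) tt
    by (intro exI[of _ ?t1]) (auto simp: add_caret_def)
qed

text \<open>Stated for an arbitrary side S of the triples, so that it covers both refining the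
  domain tree and refining the range tree.\<close>

lemma refine_by_expansions:
  fixes S :: "triple \<Rightarrow> tree"
  assumes d: "d \<ge> 1"
    and tree: "\<And>t. t \<in> trip d G \<Longrightarrow> is_tree d (S t)"
    and step: "\<And>t l. t \<in> trip d G \<Longrightarrow> l \<in> leaves (S t) \<Longrightarrow>
        \<exists>t'. (t, t') \<in> Texp d \<and> t' \<in> trip d G \<and> S t' = S t \<union> {l @ [x] | x. x \<in> {1..d}}"
  shows "t \<in> trip d G \<Longrightarrow> is_tree d U \<Longrightarrow> S t \<subseteq> U
    \<Longrightarrow> \<exists>t'. (t, t') \<in> (Texp d)\<^sup>* \<and> t' \<in> trip d G \<and> S t' = U"
proof (induction "card (U - S t)" arbitrary: t rule: less_induct)
  case less
  show ?case
  proof (cases "S t = U")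
    case False
    then obtain l where l: "l \<in> leaves (S t)" "l \<notin> leaves U"
      using tree_eq_if_leaves_sub[OF tree[OF less.prems(1)] less.prems(2,3)] by blast
    have "l \<in> U" using l(1) less.prems(3) leaves_sub by blast
    then obtain x where "l @ [x] \<in> U" using l(2) by (auto simp: leaves_def)
    then have carets: "\<forall>y\<in>{1..d}. l @ [y] \<in> U" using less.prems(2) unfolding is_tree_def by blast
    obtain t1 where t1: "(t, t1) \<in> Texp d" "t1 \<in> trip d G" "S t1 = S t \<union> {l @ [x] | x. x \<in> {1..d}}"
      using step[OF less.prems(1) l(1)] by blast
    have "l @ [1] \<in> U - S t" using l(1) carets d by (auto simp: leaves_def)
    moreover have "l @ [1] \<notin> U - S t1" using t1(3) d by auto
    moreover have sub1: "S t1 \<subseteq> U" using t1(3) carets less.prems(3) by auto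
    moreover have "U - S t1 \<subseteq> U - S t" using t1(3) by auto
    ultimately have "U - S t1 \<subset> U - S t" by blast
    then have "card (U - S t1) < card (U - S t)"
      using tree_finite[OF less.prems(2)] by (meson finite_Diff psubset_card_mono)
    from less.hyps[OF this t1(2) less.prems(2) sub1]
    obtain t' where "(t1, t') \<in> (Texp d)\<^sup>*" "t' \<in> trip d G" "S t' = U" by blast
    moreover have "(t, t') \<in> (Texp d)\<^sup>*"
      using converse_rtrancl_into_rtrancl[OF t1(1) \<open>(t1, t') \<in> (Texp d)\<^sup>*\<close>] .
    ultimately show ?thesis by blast
  next
    case True
    then show ?thesis using less.prems(1) by blast
  qed
qed

lemma refine_range:
  assumes "G \<subseteq> AutSet d" "self_similar d G" "d \<ge> 1"
    and "t \<in> trip d G" "is_tree d U" "snd (snd t) \<subseteq> U"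
  shows "\<exists>t'. (t, t') \<in> (Texp d)\<^sup>* \<and> t' \<in> trip d G \<and> snd (snd t') = U"
  by (rule refine_by_expansions[where S = "\<lambda>t. snd (snd t)"])
    (use assms expansion_at_range_leaf in \<open>auto simp: trip_def\<close>)

lemma refine_domain:
  assumes "G \<subseteq> AutSet d" "self_similar d G" "d \<ge> 1"
    and "t \<in> trip d G" "is_tree d U" "fst t \<subseteq> U"
  shows "\<exists>t'. (t, t') \<in> (Texp d)\<^sup>* \<and> t' \<in> trip d G \<and> fst t' = U"
  by (rule refine_by_expansions[where S = fst])
    (use assms expansion_at_domain_leaf in \<open>auto simp: trip_def\<close>)

definition aa_fibre :: "nat \<Rightarrow> (bseq \<Rightarrow> bseq) \<Rightarrow> triple set" where
  "aa_fibre d h = {t \<in> trip d (AutSet d). aa d t = h}"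

text \<open>Two triples realizing the same map become equal once both range trees are refined to
  their union, because a triple is determined by its map and its range tree.\<close>

lemma Teq_class_eq_aa_fibre:
  assumes d: "d \<ge> 2" and x: "x \<in> trip d (AutSet d)"
  shows "Teq d `` {x} = aa_fibre d (aa d x)"
proof
  have d1: "d \<ge> 1" using d by simp
  show "Teq d `` {x} \<subseteq> aa_fibre d (aa d x)" using Teq_trip_aa[OF d1 _ x] by (auto simp: aa_fibre_def)
  show "aa_fibre d (aa d x) \<subseteq> Teq d `` {x}"
  proof
    fix y assume "y \<in> aa_fibre d (aa d x)"
    then have y: "y \<in> trip d (AutSet d)" and ay: "aa d y = aa d x" by (auto simp: aa_fibre_def)
    let ?U = "snd (snd x) \<union> snd (snd y)"
    have U: "is_tree d ?U" using x y by (intro tree_union) (auto simp: trip_def)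
    obtain x' where x': "(x, x') \<in> (Texp d)\<^sup>*" "x' \<in> trip d (AutSet d)" "snd (snd x') = ?U"
      using refine_range[OF subset_refl self_similar_AutSet d1 x U] by auto
    obtain y' where y': "(y, y') \<in> (Texp d)\<^sup>*" "y' \<in> trip d (AutSet d)" "snd (snd y') = ?U"
      using refine_range[OF subset_refl self_similar_AutSet d1 y U] by auto
    obtain Am \<sigma> fs where xa: "x' = (Am, (\<sigma>, fs), ?U)" using x'(3) by (cases x') auto
    obtain Bm \<tau> gs where yb: "y' = (Bm, (\<tau>, gs), ?U)" using y'(3) by (cases y') auto
    have "aa d x' = aa d y'"
      using Teq_trip_aa[OF d1 rtrancl_Texp_Teq(1)[OF x'(1)] x]
        Teq_trip_aa[OF d1 rtrancl_Texp_Teq(1)[OF y'(1)] y] ay by simp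
    then have "x' = y'" using triple_eq_if_aa_eq[OF d] x'(2) y'(2) xa yb by simp
    then have "(x', y) \<in> Teq d" using rtrancl_Texp_Teq(2)[OF y'(1)] by simp
    with rtrancl_Texp_Teq(1)[OF x'(1)] have "(x, y) \<in> Teq d"
      unfolding Teq_def by (rule rtrancl_trans)
    then show "y \<in> Teq d `` {x}" by simp
  qed
qed

lemma composable_representatives:
  assumes G_Aut: "G \<subseteq> AutSet d" and ss: "self_similar d G" and d: "d \<ge> 1"
    and a: "a \<in> trip d G" and b: "b \<in> trip d G"
  obtains Tm f U g Up where "(Tm, f, U) \<in> trip d G" "(U, g, Up) \<in> trip d G"
    "aa d (Tm, f, U) = aa d a" "aa d (U, g, Up) = aa d b"
proof -
  let ?U = "snd (snd a) \<union> fst b"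
  have U: "is_tree d ?U" using a b by (intro tree_union) (auto simp: trip_def)
  obtain a' where a': "(a, a') \<in> (Texp d)\<^sup>*" "a' \<in> trip d G" "snd (snd a') = ?U"
    using refine_range[OF G_Aut ss d a U] by auto
  obtain b' where b': "(b, b') \<in> (Texp d)\<^sup>*" "b' \<in> trip d G" "fst b' = ?U"
    using refine_domain[OF G_Aut ss d b U] by auto
  obtain Am f where ae: "a' = (Am, f, ?U)" using a'(3) by (cases a') auto
  obtain g Bp where be: "b' = (?U, g, Bp)" using b'(3) by (cases b') auto
  have "aa d a' = aa d a" "aa d b' = aa d b"
    using Teq_trip_aa[OF d rtrancl_Texp_Teq(1)[OF a'(1)]] Teq_trip_aa[OF d rtrancl_Texp_Teq(1)[OF b'(1)]]
      a b trip_mono[OF G_Aut] by auto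
  then show ?thesis using that[of Am f ?U g Bp] a'(2) b'(2) ae be by simp
qed

section \<open>The groups V_d(G) and T(S_* wr G)\<close>

lemma subgroup_AutGrpD:
  assumes "subgroup G (AutGrp d)"
  shows "G \<subseteq> AutSet d" "id \<in> G" "\<And>f g. f \<in> G \<Longrightarrow> g \<in> G \<Longrightarrow> f \<circ> g \<in> G"
    "\<And>f. f \<in> G \<Longrightarrow> autinv d f \<in> G"
proof -
  show G_Aut: "G \<subseteq> AutSet d" using subgroup.subset[OF assms] by (simp add: AutGrp_def)
  show "id \<in> G" using subgroup.one_closed[OF assms] by (simp add: AutGrp_def)
  show "f \<circ> g \<in> G" if "f \<in> G" "g \<in> G" for f g
    using subgroup.m_closed[OF assms that] by (simp add: AutGrp_def)
  show "autinv d f \<in> G" if "f \<in> G" for f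
    using subgroup.m_inv_closed[OF assms that] AutGrp_inv[of f d] that G_Aut by auto
qed

lemma subgroup_AutSet: "subgroup (AutSet d) (AutGrp d)"
  using group.subgroup_self[OF AutGrp_group] by (simp add: AutGrp_def)

lemma tone_trip: "id \<in> G \<Longrightarrow> tone \<in> trip d G"
  unfolding tone_def trip_def wr_def using tree_root nleaves_root by (auto simp: permutes_id)

lemma aa_tone: "aa d tone = id"
  unfolding tone_def using aa_id_triple[OF tree_root] .

lemma Vd_comp_closed:
  assumes sg: "subgroup G (AutGrp d)" and ss: "self_similar d G" and d: "d \<ge> 1"
    and h1: "h1 \<in> Vd d G" and h2: "h2 \<in> Vd d G"
  shows "h1 \<circ> h2 \<in> Vd d G"
proof -
  note G = subgroup_AutGrpD[OF sg]
  obtain a b where ab: "a \<in> trip d G" "b \<in> trip d G" "h1 = aa d a" "h2 = aa d b"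
    using h1 h2 by (auto simp: Vd_def)
  obtain Tm f U g Up where fg: "(Tm, f, U) \<in> trip d G" "(U, g, Up) \<in> trip d G"
    "aa d (Tm, f, U) = aa d a" "aa d (U, g, Up) = aa d b"
    using composable_representatives[OF G(1) ss d ab(1,2)] by blast
  have "(Tm, wmult f g, Up) \<in> trip d G" using wmult_trip[OF fg(1,2) G(3)] .
  moreover have "h1 \<circ> h2 = aa d (Tm, wmult f g, Up)"
    using aa_comp[OF subsetD[OF trip_mono[OF G(1)] fg(1)] subsetD[OF trip_mono[OF G(1)] fg(2)]]
    by (simp add: fg(3,4) ab(3,4))
  ultimately show ?thesis unfolding Vd_def by (rule rev_image_eqI[where f = "aa d"])
qed

lemma VGrp_group:
  assumes sg: "subgroup G (AutGrp d)" and ss: "self_similar d G" and d: "d \<ge> 1"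
  shows "group (VGrp d G)"
proof -
  note G = subgroup_AutGrpD[OF sg]
  have id: "id \<in> Vd d G" unfolding Vd_def
    using image_eqI[where f = "aa d", OF aa_tone[of d, symmetric] tone_trip[of G d, OF G(2)]] .
  have inv: "\<exists>h'\<in>Vd d G. h' \<circ> h = id" if "h \<in> Vd d G" for h
    using that aa_left_inverse[OF _ G(1) G(4)] unfolding Vd_def by blast
  show ?thesis
    by (rule groupI) (use Vd_comp_closed[OF sg ss d] id inv in \<open>auto simp: VGrp_def comp_assoc\<close>)
qed

lemma Vd_subgroup:
  assumes sg: "subgroup G (AutGrp d)" and ss: "self_similar d G" and d: "d \<ge> 1"
  shows "subgroup (Vd d G) (VGrp d (AutSet d))"
proof (rule group.group_incl_imp_subgroup)
  show "group (VGrp d (AutSet d))" using VGrp_group[OF subgroup_AutSet self_similar_AutSet d] .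
  show "Vd d G \<subseteq> carrier (VGrp d (AutSet d))"
    using trip_mono[OF subgroup_AutGrpD(1)[OF sg]] by (auto simp: VGrp_def Vd_def)
  show "group ((VGrp d (AutSet d))\<lparr>carrier := Vd d G\<rparr>)"
    using VGrp_group[OF sg ss d] by (simp add: VGrp_def)
qed

lemma tmult_aa_fibre:
  assumes d: "d \<ge> 2" and h1: "h1 \<in> Vd d (AutSet d)" and h2: "h2 \<in> Vd d (AutSet d)"
  shows "tmult d (aa_fibre d h1) (aa_fibre d h2) = aa_fibre d (h1 \<circ> h2)"
proof
  have d1: "d \<ge> 1" using d by simp
  show "tmult d (aa_fibre d h1) (aa_fibre d h2) \<subseteq> aa_fibre d (h1 \<circ> h2)"
  proof
    fix z assume "z \<in> tmult d (aa_fibre d h1) (aa_fibre d h2)"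
    then obtain Tm f Tp g Up where f: "(Tm, f, Tp) \<in> aa_fibre d h1" and g: "(Tp, g, Up) \<in> aa_fibre d h2"
      and z: "z \<in> Teq d `` {(Tm, wmult f g, Up)}"
      unfolding tmult_def by blast
    have ft: "(Tm, f, Tp) \<in> trip d (AutSet d)" and gt: "(Tp, g, Up) \<in> trip d (AutSet d)"
      using f g by (simp_all add: aa_fibre_def)
    have "(Tm, wmult f g, Up) \<in> trip d (AutSet d)" using wmult_trip[OF ft gt comp_AutSet] .
    moreover have "aa d (Tm, wmult f g, Up) = h1 \<circ> h2"
      using aa_comp[OF ft gt] f g by (simp add: aa_fibre_def)
    ultimately show "z \<in> aa_fibre d (h1 \<circ> h2)" using z Teq_class_eq_aa_fibre[OF d] by simp
  qed
  show "aa_fibre d (h1 \<circ> h2) \<subseteq> tmult d (aa_fibre d h1) (aa_fibre d h2)"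
  proof
    fix z assume z: "z \<in> aa_fibre d (h1 \<circ> h2)"
    obtain a b where ab: "a \<in> trip d (AutSet d)" "b \<in> trip d (AutSet d)" "aa d a = h1" "aa d b = h2"
      using h1 h2 by (auto simp: Vd_def)
    obtain Tm f U g Up where fg: "(Tm, f, U) \<in> trip d (AutSet d)" "(U, g, Up) \<in> trip d (AutSet d)"
      "aa d (Tm, f, U) = aa d a" "aa d (U, g, Up) = aa d b"
      using composable_representatives[OF subset_refl self_similar_AutSet d1 ab(1,2)] by blast
    let ?c = "(Tm, wmult f g, Up)"
    have "?c \<in> trip d (AutSet d)" using wmult_trip[OF fg(1,2) comp_AutSet] .
    moreover have "aa d ?c = h1 \<circ> h2" using aa_comp[OF fg(1,2)] fg(3,4) ab(3,4) by simp
    ultimately have "z \<in> Teq d `` {?c}" using z Teq_class_eq_aa_fibre[OF d] by simp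
    moreover have "(Tm, f, U) \<in> aa_fibre d h1" "(U, g, Up) \<in> aa_fibre d h2"
      using fg ab by (simp_all add: aa_fibre_def)
    ultimately show "z \<in> tmult d (aa_fibre d h1) (aa_fibre d h2)" unfolding tmult_def by blast
  qed
qed

lemma quotient_Teq: "d \<ge> 2 \<Longrightarrow> trip d (AutSet d) // Teq d = aa_fibre d ` Vd d (AutSet d)"
  unfolding quotient_def Vd_def by (auto simp: Teq_class_eq_aa_fibre)

lemma Teq_class_tone: "d \<ge> 2 \<Longrightarrow> Teq d `` {tone} = aa_fibre d id"
  using Teq_class_eq_aa_fibre[of d tone] tone_trip[OF id_AutSet] aa_tone by simp

lemma aa_fibre_hom: "d \<ge> 2 \<Longrightarrow> aa_fibre d \<in> hom (VGrp d (AutSet d)) (TGrp d)"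
  unfolding hom_def using quotient_Teq tmult_aa_fibre by (auto simp: VGrp_def TGrp_def)

text \<open>T(S_* wr Aut) is a group because it is the homomorphic image of V_d(Aut) under the
  bijection h \<mapsto> aa_fibre d h.\<close>

lemma TGrp_group:
  assumes d: "d \<ge> 2"
  shows "group (TGrp d)"
proof -
  have "group ((TGrp d)\<lparr>carrier := aa_fibre d ` Vd d (AutSet d), one := aa_fibre d id\<rparr>)"
    using group.hom_imp_img_group[OF VGrp_group[OF subgroup_AutSet self_similar_AutSet] aa_fibre_hom[OF d]] d
    by (simp add: VGrp_def)
  then show ?thesis using quotient_Teq[OF d] Teq_class_tone[OF d] by (simp add: TGrp_def)
qed

lemma TGrp_class_aa: "d \<ge> 2 \<Longrightarrow> \<forall>A\<in>carrier (TGrp d). \<forall>s\<in>A. \<forall>t\<in>A. aa d s = aa d t"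
  using quotient_Teq by (auto simp: TGrp_def aa_fibre_def)

lemma TS_eq: "d \<ge> 2 \<Longrightarrow> G \<subseteq> AutSet d \<Longrightarrow> TS d G = aa_fibre d ` Vd d G"
  unfolding TS_def Vd_def image_image
  using Teq_class_eq_aa_fibre trip_mono by (intro image_cong) blast+

lemma TS_subgroup:
  assumes d: "d \<ge> 2" and sg: "subgroup G (AutGrp d)" and ss: "self_similar d G"
  shows "subgroup (TS d G) (TGrp d)"
proof -
  have d1: "d \<ge> 1" using d by simp
  have "group_hom (VGrp d (AutSet d)) (TGrp d) (aa_fibre d)"
    using VGrp_group[OF subgroup_AutSet self_similar_AutSet d1] TGrp_group[OF d] aa_fibre_hom[OF d]
    by (simp add: group_hom_def group_hom_axioms_def)
  then show ?thesis
    using group_hom.subgroup_img_is_subgroup[OF _ Vd_subgroup[OF sg ss d1]]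
      TS_eq[OF d subgroup_AutGrpD(1)[OF sg]] by simp
qed

lemma Phi_aa_fibre: "h \<in> Vd d (AutSet d) \<Longrightarrow> Phi d (aa_fibre d h) = h"
  unfolding Phi_def Vd_def aa_fibre_def by (auto intro: someI2)

lemma Phi_iso:
  assumes d: "d \<ge> 2" and G_Aut: "G \<subseteq> AutSet d"
  shows "Phi d \<in> iso ((TGrp d)\<lparr>carrier := TS d G\<rparr>) (VGrp d G)"
proof -
  have d1: "d \<ge> 1" using d by simp
  have VG: "Vd d G \<subseteq> Vd d (AutSet d)" unfolding Vd_def using trip_mono[OF G_Aut] by blast
  have Phi: "Phi d (aa_fibre d h) = h" if "h \<in> Vd d G" for h using Phi_aa_fibre VG that by blast
  have "Phi d (aa_fibre d h1 \<otimes>\<^bsub>TGrp d\<^esub> aa_fibre d h2) = h1 \<circ> h2"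
    if "h1 \<in> Vd d G" "h2 \<in> Vd d G" for h1 h2
  proof -
    have h: "h1 \<in> Vd d (AutSet d)" "h2 \<in> Vd d (AutSet d)" using VG that by auto
    have "aa_fibre d h1 \<otimes>\<^bsub>TGrp d\<^esub> aa_fibre d h2 = aa_fibre d (h1 \<circ> h2)"
      using tmult_aa_fibre[OF d h] by (simp add: TGrp_def)
    then show ?thesis
      using Phi_aa_fibre Vd_comp_closed[OF subgroup_AutSet self_similar_AutSet d1 h] by simp
  qed
  then have "Phi d \<in> hom ((TGrp d)\<lparr>carrier := TS d G\<rparr>) (VGrp d G)"
    unfolding hom_def TS_eq[OF d G_Aut] using Phi by (auto simp: VGrp_def)
  moreover have "bij_betw (Phi d) (aa_fibre d ` Vd d G) (Vd d G)"
    unfolding bij_betw_def inj_on_def image_image using Phi by auto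
  ultimately show ?thesis unfolding iso_def TS_eq[OF d G_Aut] by (simp add: VGrp_def)
qed

theorem mainTheorem2:
  fixes d :: nat and G :: "autf set"
  assumes "d \<ge> 2"
    and "subgroup G (AutGrp d)"
    and "self_similar d G"
  shows "(\<forall>n k g. 1 \<le> k \<and> k \<le> n \<and> g \<in> wr n G \<longrightarrow> clone d n k g \<in> wr (n + d - 1) G)
       \<and> group (TGrp d)
       \<and> subgroup (TS d G) (TGrp d)
       \<and> (\<forall>A\<in>carrier (TGrp d). \<forall>s\<in>A. \<forall>t\<in>A. aa d s = aa d t)
       \<and> Phi d \<in> iso ((TGrp d)\<lparr>carrier := TS d G\<rparr>) (VGrp d G)"
proof -
  have d1: "d \<ge> 1" using assms(1) by simp
  have G_Aut: "G \<subseteq> AutSet d" using subgroup_AutGrpD(1)[OF assms(2)] .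
  show ?thesis
    using clone_wr[OF G_Aut assms(3) d1] TGrp_group[OF assms(1)] TS_subgroup[OF assms]
      TGrp_class_aa[OF assms(1)] Phi_iso[OF assms(1) G_Aut]
    by blast
qed

end
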